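(* Let $\mathbf K$ be an infinite field. Every automorphism $\Phi$ of $(Ass\text{-}\mathbf K)^0$ can be written as $$\Phi=\Upsilon\circ\hat\varphi\circ\Psi,$$ where $\Psi$ is an inner automorphism, $\hat\varphi$ is the standard $\varphi$-automorphism for some automorphism $\varphi$ of the field $\mathbf K$, and $\Upsilon$ is either the mirror automorphism or the identity automorphism.
   Context: A $\mathbf K$-algebra is an associative unital ring $A$ with a unital ring homomorphism $\mathbf K\to Z(A)$; homomorphisms are unital ring homomorphisms compatible with these maps. $(Ass\text{-}\mathbf K)^0$ is the category of free associative $\mathbf K$-algebras $\mathbf K\langle X\rangle$ on finite subsets $X$ of a fixed infinite set $X_0$, with all homomorphisms. Inner automorphism: an automorphism $\Psi$ is inner if there are $\mathbf K$-algebra isomorphisms $\sigma_A:A\to\Psi(A)$ with $\Psi(\nu)=\sigma_B\circ\nu\circ\sigma_A^{-1}$ for every morphism $\nu:A\to B$. Standard $\varphi$-automorphism: for an automorphism $\varphi$ of $\mathbf K$ and a free algebra $C=\mathbf K\langle X_C\rangle$, let $\varphi_C:C\to C$ be $\sum_w a_w w\mapsto\sum_w\varphi(a_w)w$, where $w$ ranges over monomials in $X_C$. The standard $\varphi$-automorphism $\hat\varphi$ fixes all objects and sends $\nu:A\to B$ to $\varphi_B\circ\nu\circ\varphi_A^{-1}$. Mirror automorphism $\Upsilon$: for each $A$, let $\eta_A$ be the $\mathbf K$-linear anti-automorphism reversing every monomial. Then $\Upsilon(A)=A$ and $\Upsilon(\nu)=\eta_B\circ\nu\circ\eta_A^{-1}$.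 *)

theory Defs
  imports Main
begin

text \<open>Elements of the free associative algebra K<X> are represented as
finitely supported coefficient functions on words (monomials = lists over X).\<close>

type_synonym ('x, 'k) fpoly = "'x list \<Rightarrow> 'k"

definition fpolys :: "'x set \<Rightarrow> ('x, 'k::field) fpoly set" where
  "fpolys X = {p. finite {w. p w \<noteq> 0} \<and> (\<forall>w. p w \<noteq> 0 \<longrightarrow> set w \<subseteq> X)}"

definition fp_add :: "('x, 'k::field) fpoly \<Rightarrow> ('x, 'k) fpoly \<Rightarrow> ('x, 'k) fpoly" where
  "fp_add p q = (\<lambda>w. p w + q w)"

definition fp_smult :: "'k::field \<Rightarrow> ('x, 'k) fpoly \<Rightarrow> ('x, 'k) fpoly" where
  "fp_smult c p = (\<lambda>w. c * p w)"

definition fp_mult :: "('x, 'k::field) fpoly \<Rightarrow> ('x, 'k) fpoly \<Rightarrow> ('x, 'k) fpoly" where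
  "fp_mult p q = (\<lambda>w. \<Sum>i\<in>{0..length w}. p (take i w) * q (drop i w))"

definition fp_one :: "('x, 'k::field) fpoly" where
  "fp_one = (\<lambda>w. if w = [] then 1 else 0)"

definition alg_hom :: "'x set \<Rightarrow> 'x set \<Rightarrow> (('x, 'k::field) fpoly \<Rightarrow> ('x, 'k) fpoly) \<Rightarrow> bool" where
  "alg_hom X Y f \<longleftrightarrow>
     (\<forall>p\<in>fpolys X. f p \<in> fpolys Y) \<and>
     (\<forall>p\<in>fpolys X. \<forall>q\<in>fpolys X. f (fp_add p q) = fp_add (f p) (f q)) \<and>
     (\<forall>p\<in>fpolys X. \<forall>q\<in>fpolys X. f (fp_mult p q) = fp_mult (f p) (f q)) \<and>
     (\<forall>c. \<forall>p\<in>fpolys X. f (fp_smult c p) = fp_smult c (f p)) \<and>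
     f fp_one = fp_one \<and>
     (\<forall>p. p \<notin> fpolys X \<longrightarrow> f p = undefined)"

text \<open>Objects: finite subsets X of the infinite set UNIV :: 'x set (X0).
Morphisms: triples (domain, codomain, homomorphism).\<close>
type_synonym ('x, 'k) mor = "'x set \<times> 'x set \<times> (('x, 'k) fpoly \<Rightarrow> ('x, 'k) fpoly)"

definition Obj :: "'x set set" where
  "Obj = {X. finite X}"

definition Mor :: "('x, 'k::field) mor set" where
  "Mor = {(X, Y, f). finite X \<and> finite Y \<and> alg_hom X Y f}"

definition mdom :: "('x, 'k) mor \<Rightarrow> 'x set" where "mdom m = fst m"
definition mcod :: "('x, 'k) mor \<Rightarrow> 'x set" where "mcod m = fst (snd m)"
definition mfun :: "('x, 'k) mor \<Rightarrow> ('x, 'k) fpoly \<Rightarrow> ('x, 'k) fpoly" where "mfun m = snd (snd m)"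

definition restr :: "'x set \<Rightarrow> (('x, 'k::field) fpoly \<Rightarrow> ('x, 'k) fpoly) \<Rightarrow> ('x, 'k) fpoly \<Rightarrow> ('x, 'k) fpoly" where
  "restr X f = (\<lambda>p. if p \<in> fpolys X then f p else undefined)"

definition mcomp :: "('x, 'k::field) mor \<Rightarrow> ('x, 'k) mor \<Rightarrow> ('x, 'k) mor" where
  "mcomp g f = (mdom f, mcod g, restr (mdom f) (mfun g \<circ> mfun f))"

definition mid :: "'x set \<Rightarrow> ('x, 'k::field) mor" where
  "mid X = (X, X, restr X id)"

definition cat_aut :: "('x set \<Rightarrow> 'x set) \<Rightarrow> (('x, 'k::field) mor \<Rightarrow> ('x, 'k) mor) \<Rightarrow> bool" where
  "cat_aut FO FM \<longleftrightarrow>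
     bij_betw FO Obj Obj \<and> bij_betw FM Mor Mor \<and>
     (\<forall>m\<in>Mor. mdom (FM m) = FO (mdom m) \<and> mcod (FM m) = FO (mcod m)) \<and>
     (\<forall>f\<in>Mor. \<forall>g\<in>Mor. mcod f = mdom g \<longrightarrow> FM (mcomp g f) = mcomp (FM g) (FM f)) \<and>
     (\<forall>X\<in>Obj. FM (mid X) = mid (FO X))"

definition inner_aut :: "('x set \<Rightarrow> 'x set) \<Rightarrow> (('x, 'k::field) mor \<Rightarrow> ('x, 'k) mor) \<Rightarrow> bool" where
  "inner_aut FO FM \<longleftrightarrow>
     (\<exists>\<sigma> :: 'x set \<Rightarrow> ('x, 'k) fpoly \<Rightarrow> ('x, 'k) fpoly.
        (\<forall>X\<in>Obj. alg_hom X (FO X) (\<sigma> X) \<and> bij_betw (\<sigma> X) (fpolys X) (fpolys (FO X))) \<and>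
        (\<forall>m\<in>Mor. FM m = (FO (mdom m), FO (mcod m),
            restr (FO (mdom m))
              (\<sigma> (mcod m) \<circ> mfun m \<circ> inv_into (fpolys (mdom m)) (\<sigma> (mdom m))))))"

definition field_aut :: "('k::field \<Rightarrow> 'k) \<Rightarrow> bool" where
  "field_aut \<phi> \<longleftrightarrow> bij \<phi> \<and> (\<forall>a b. \<phi> (a + b) = \<phi> a + \<phi> b) \<and>
     (\<forall>a b. \<phi> (a * b) = \<phi> a * \<phi> b) \<and> \<phi> 1 = 1"

definition coeff_map :: "('k::field \<Rightarrow> 'k) \<Rightarrow> ('x, 'k) fpoly \<Rightarrow> ('x, 'k) fpoly" where
  "coeff_map \<phi> p = \<phi> \<circ> p"

text \<open>Standard phi-automorphism (on morphisms; it fixes all objects).\<close>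
definition std_aut :: "('k::field \<Rightarrow> 'k) \<Rightarrow> ('x, 'k) mor \<Rightarrow> ('x, 'k) mor" where
  "std_aut \<phi> m = (mdom m, mcod m,
     restr (mdom m) (coeff_map \<phi> \<circ> mfun m \<circ> coeff_map (inv \<phi>)))"

definition mirror_map :: "('x, 'k::field) fpoly \<Rightarrow> ('x, 'k) fpoly" where
  "mirror_map p = p \<circ> rev"

text \<open>Mirror automorphism (on morphisms; it fixes all objects); eta is an involution.\<close>
definition mirror_aut :: "('x, 'k::field) mor \<Rightarrow> ('x, 'k) mor" where
  "mirror_aut m = (mdom m, mcod m,
     restr (mdom m) (mirror_map \<circ> mfun m \<circ> inv_into (fpolys (mdom m)) mirror_map))"

end

theory Submission
  imports Defs "HOL-Library.Function_Algebras" "HOL-Computational_Algebra.Polynomial"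
begin

text \<open>
An automorphism \<open>F\<close> of the category sends the free algebra \<open>K\<langle>x\<^sub>0\<rangle>\<close> on one generator to a
one-generator algebra \<open>K\<langle>y\<^sub>0\<rangle>\<close>: every homomorphism out of \<open>K\<langle>x\<^sub>0\<rangle>\<close> has commutative image,
while a single homomorphism out of an algebra on two generators can hit two non-commuting elements.
As homomorphisms \<open>K\<langle>x\<^sub>0\<rangle> \<rightarrow> A\<close> are the elements of \<open>A\<close>, \<open>F\<close> induces bijections
\<open>Fel A : A \<rightarrow> F A\<close>, natural in \<open>A\<close>. On the constants they induce a bijection \<open>\<kappa>\<close> of \<open>K\<close> with
\<open>\<kappa> (p(a)) = (Fel p)(\<kappa> a)\<close> for every polynomial \<open>p\<close> in \<open>x\<^sub>0\<close>. For the invertible substitutions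
\<open>x\<^sub>0 \<mapsto> x\<^sub>0 + c\<close> and \<open>x\<^sub>0 \<mapsto> l x\<^sub>0\<close>, \<open>Fel p\<close> is again an invertible polynomial map of the infinite
field \<open>K\<close>, hence affine; so \<open>\<kappa>\<close> is semi-affine, \<open>\<kappa> = k\<^sub>1 \<phi> + k\<^sub>0\<close> with \<open>\<phi>\<close> a field automorphism.

Correcting \<open>Fel\<close> by this affine map and by \<open>\<phi>\<^sup>-\<^sup>1\<close> yields natural bijections \<open>U A : A \<rightarrow> F A\<close> that
fix constants and commute with scalars. Since \<open>a + b\<close> and \<open>a b\<close> are the images of \<open>x + y\<close> and
\<open>x y\<close> under the substitution \<open>x \<mapsto> a, y \<mapsto> b\<close>, naturality reduces additivity and
multiplicativity of \<open>U\<close> to the two-variable polynomials \<open>U\<^sup>-\<^sup>1(U x + U y)\<close> and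
\<open>U\<^sup>-\<^sup>1(U x \<cdot> U y)\<close>; comparing homogeneity degrees over the infinite field shows that they are
\<open>x + y\<close> and \<open>\<alpha> x y + \<beta> y x\<close> with \<open>\<alpha> + \<beta> = 1\<close> and, by associativity, \<open>\<alpha> \<beta> = 0\<close>. So \<open>U\<close>
is multiplicative or anti-multiplicative, and the algebra isomorphisms \<open>U A\<close>, respectively
\<open>\<eta> \<circ> U A\<close>, define the inner automorphism \<open>\<Psi>\<close>.
\<close>

section \<open>The algebra of coefficient functions\<close>

declare plus_fun_apply[simp del] zero_fun_apply[simp del]

definition mon :: "'x list \<Rightarrow> ('x, 'k::field) fpoly" where
  "mon u = (\<lambda>w. if w = u then 1 else 0)"

definition cst :: "'k::field \<Rightarrow> ('x, 'k) fpoly" where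
  "cst c = (\<lambda>w. if w = [] then c else 0)"

definition fsupp :: "('x, 'k::field) fpoly \<Rightarrow> 'x list set" where
  "fsupp p = {w. p w \<noteq> 0}"

definition splits :: "'x list \<Rightarrow> ('x list \<times> 'x list) set" where
  "splits w = {(u, v). u @ v = w}"

definition splits3 :: "'x list \<Rightarrow> ('x list \<times> 'x list \<times> 'x list) set" where
  "splits3 w = {(a, b, c). a @ b @ c = w}"

lemma fp_add_eq: "fp_add p q = p + q"
  by (simp add: fp_add_def plus_fun_def)

lemma fp_smult_apply: "fp_smult c p w = c * p w"
  by (simp add: fp_smult_def)

lemma sum_fun_apply: "(\<Sum>i\<in>A. f i) w = (\<Sum>i\<in>A. f i w)"
  by (induction A rule: infinite_finite_induct) (auto simp: plus_fun_apply zero_fun_apply)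

lemma splits_image: "splits w = (\<lambda>i. (take i w, drop i w)) ` {0..length w}"
proof
  show "splits w \<subseteq> (\<lambda>i. (take i w, drop i w)) ` {0..length w}"
  proof
    fix z assume "z \<in> splits w"
    then obtain u v where "z = (u, v)" "u @ v = w" by (auto simp: splits_def)
    then show "z \<in> (\<lambda>i. (take i w, drop i w)) ` {0..length w}"
      by (intro image_eqI[where x="length u"]) auto
  qed
qed (auto simp: splits_def)

lemma finite_splits[simp]: "finite (splits w)"
  by (simp add: splits_image)

lemma fp_mult_splits: "fp_mult p q w = (\<Sum>(u, v)\<in>splits w. p u * q v)"
proof -
  have "inj_on (\<lambda>i. (take i w, drop i w)) {0..length w}"
    by (rule inj_onI) (metis Pair_inject append_eq_conv_conj atLeastAtMost_iff length_take min.absorb2)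
  then show ?thesis
    unfolding fp_mult_def splits_image by (subst sum.reindex) (simp_all add: o_def)
qed

lemma sum_splits_left:
  "(\<Sum>(m, c)\<in>splits w. \<Sum>(a, b)\<in>splits m. f a b c) = (\<Sum>(a, b, c)\<in>splits3 w. f a b c)"
proof -
  have "(\<Sum>(m, c)\<in>splits w. \<Sum>(a, b)\<in>splits m. f a b c)
      = (\<Sum>((m, c), (a, b))\<in>(SIGMA z:splits w. splits (fst z)). f a b c)"
    by (subst sum.Sigma[symmetric]) (auto simp: case_prod_beta intro!: sum.cong)
  also have "\<dots> = (\<Sum>(a, b, c)\<in>splits3 w. f a b c)"
    by (rule sum.reindex_bij_witness[where i="\<lambda>(a,b,c). ((a@b, c), (a, b))" and j="\<lambda>((m,c),(a,b)). (a,b,c)"])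
       (auto simp: splits_def splits3_def)
  finally show ?thesis .
qed

lemma sum_splits_right:
  "(\<Sum>(a, m)\<in>splits w. \<Sum>(b, c)\<in>splits m. f a b c) = (\<Sum>(a, b, c)\<in>splits3 w. f a b c)"
proof -
  have "(\<Sum>(a, m)\<in>splits w. \<Sum>(b, c)\<in>splits m. f a b c)
      = (\<Sum>((a, m), (b, c))\<in>(SIGMA z:splits w. splits (snd z)). f a b c)"
    by (subst sum.Sigma[symmetric]) (auto simp: case_prod_beta intro!: sum.cong)
  also have "\<dots> = (\<Sum>(a, b, c)\<in>splits3 w. f a b c)"
    by (rule sum.reindex_bij_witness[where i="\<lambda>(a,b,c). ((a, b@c), (b, c))" and j="\<lambda>((a,m),(b,c)). (a,b,c)"])
       (auto simp: splits_def splits3_def)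
  finally show ?thesis .
qed

lemma fp_mult_assoc: "fp_mult (fp_mult p q) r = fp_mult p (fp_mult q r)"
proof
  fix w
  have "fp_mult (fp_mult p q) r w = (\<Sum>(m, c)\<in>splits w. \<Sum>(a, b)\<in>splits m. p a * q b * r c)"
    by (simp add: fp_mult_splits case_prod_beta sum_distrib_right)
  also have "\<dots> = (\<Sum>(a, b, c)\<in>splits3 w. p a * q b * r c)"
    by (rule sum_splits_left)
  also have "\<dots> = (\<Sum>(a, m)\<in>splits w. \<Sum>(b, c)\<in>splits m. p a * q b * r c)"
    by (rule sum_splits_right[symmetric])
  also have "\<dots> = fp_mult p (fp_mult q r) w"
    by (simp add: fp_mult_splits case_prod_beta sum_distrib_left mult.assoc)
  finally show "fp_mult (fp_mult p q) r w = fp_mult p (fp_mult q r) w" .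
qed

lemma fp_mult_add_left: "fp_mult (p + q) r = fp_mult p r + fp_mult q r"
  by (auto simp: fun_eq_iff plus_fun_apply fp_mult_def distrib_right sum.distrib)

lemma fp_mult_add_right: "fp_mult r (p + q) = fp_mult r p + fp_mult r q"
  by (auto simp: fun_eq_iff plus_fun_apply fp_mult_def distrib_left sum.distrib)

lemma fp_mult_smult_left: "fp_mult (fp_smult c p) q = fp_smult c (fp_mult p q)"
  by (auto simp: fun_eq_iff fp_mult_def sum_distrib_left mult.assoc fp_smult_def)

lemma fp_mult_smult_right: "fp_mult p (fp_smult c q) = fp_smult c (fp_mult p q)"
  by (auto simp: fun_eq_iff fp_mult_def sum_distrib_left mult.left_commute fp_smult_def)

lemma fp_mult_zero_left[simp]: "fp_mult 0 q = 0"
  by (auto simp: fun_eq_iff zero_fun_apply fp_mult_def)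

lemma fp_mult_zero_right[simp]: "fp_mult q 0 = 0"
  by (auto simp: fun_eq_iff zero_fun_apply fp_mult_def)

lemma fp_smult_zero[simp]: "fp_smult c 0 = 0"
  by (auto simp: fun_eq_iff zero_fun_apply fp_smult_def)

lemma fp_smult_zero_left[simp]: "fp_smult 0 p = 0"
  by (auto simp: fun_eq_iff zero_fun_apply fp_smult_def)

lemma fp_smult_one[simp]: "fp_smult 1 p = p"
  by (auto simp: fun_eq_iff fp_smult_def)

lemma fp_smult_smult[simp]: "fp_smult a (fp_smult b p) = fp_smult (a * b) p"
  by (auto simp: fun_eq_iff fp_smult_def)

lemma fp_smult_add: "fp_smult c (p + q) = fp_smult c p + fp_smult c q"
  by (auto simp: fun_eq_iff plus_fun_apply fp_smult_def distrib_left)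

lemma fp_smult_add_left: "fp_smult (a + b) p = fp_smult a p + fp_smult b p"
  by (auto simp: fun_eq_iff plus_fun_apply fp_smult_def distrib_right)

lemma fp_smult_sum: "fp_smult c (\<Sum>i\<in>A. f i) = (\<Sum>i\<in>A. fp_smult c (f i))"
  by (induction A rule: infinite_finite_induct) (simp_all add: fp_smult_add)

lemma fp_mult_sum_left: "fp_mult (\<Sum>i\<in>A. f i) q = (\<Sum>i\<in>A. fp_mult (f i) q)"
  by (induction A rule: infinite_finite_induct) (simp_all add: fp_mult_add_left)

lemma fp_mult_sum_right: "fp_mult q (\<Sum>i\<in>A. f i) = (\<Sum>i\<in>A. fp_mult q (f i))"
  by (induction A rule: infinite_finite_induct) (simp_all add: fp_mult_add_right)

lemma fp_mult_mon: "fp_mult (mon u) (mon v) = mon (u @ v)"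
proof
  fix w
  have "fp_mult (mon u) (mon v) w = (\<Sum>z\<in>splits w. if z = (u, v) then 1 else 0)"
    unfolding fp_mult_splits by (rule sum.cong) (auto simp: mon_def split: if_splits)
  also have "\<dots> = mon (u @ v) w"
    by (subst sum.delta[OF finite_splits]) (auto simp: splits_def mon_def)
  finally show "fp_mult (mon u) (mon v) w = mon (u @ v) w" .
qed

lemma fp_one_mon: "fp_one = mon []"
  by (auto simp: fp_one_def mon_def)

lemma cst_eq: "cst c = fp_smult c fp_one"
  by (auto simp: cst_def fp_one_def fp_smult_def)

lemma fp_mult_one_left[simp]: "fp_mult fp_one p = p"
proof
  fix w
  have "fp_mult fp_one p w = (\<Sum>z\<in>splits w. if z = ([], w) then p (snd z) else 0)"
    unfolding fp_mult_splits by (rule sum.cong) (auto simp: fp_one_def splits_def split: if_splits)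
  also have "\<dots> = p w"
    by (subst sum.delta[OF finite_splits]) (auto simp: splits_def)
  finally show "fp_mult fp_one p w = p w" .
qed

lemma fp_mult_one_right[simp]: "fp_mult p fp_one = p"
proof
  fix w
  have "fp_mult p fp_one w = (\<Sum>z\<in>splits w. if z = (w, []) then p (fst z) else 0)"
    unfolding fp_mult_splits by (rule sum.cong) (auto simp: fp_one_def splits_def split: if_splits)
  also have "\<dots> = p w"
    by (subst sum.delta[OF finite_splits]) (auto simp: splits_def)
  finally show "fp_mult p fp_one w = p w" .
qed

lemma fp_mult_cst_left: "fp_mult (cst c) p = fp_smult c p"
  by (simp add: cst_eq fp_mult_smult_left)

lemma cst_mult: "fp_mult (cst a) (cst b) = cst (a * b)"
  unfolding fp_mult_cst_left by (auto simp: cst_def fun_eq_iff fp_smult_def)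

lemma cst_add: "cst a + cst b = cst (a + b)"
  by (auto simp: cst_def fun_eq_iff plus_fun_apply)

lemma cst_zero[simp]: "cst 0 = 0"
  by (auto simp: cst_def fun_eq_iff zero_fun_apply)

lemma cst_one: "cst 1 = fp_one"
  by (auto simp: cst_def fp_one_def)

lemma cst_sum: "(\<Sum>i\<in>A. cst (f i)) = cst (\<Sum>i\<in>A. f i)"
  by (induction A rule: infinite_finite_induct) (simp_all add: cst_add)

lemma cst_inj: "cst a = cst b \<Longrightarrow> a = b"
  by (metis cst_def)

lemma smult_cst: "fp_smult a (cst b) = cst (a * b)"
  by (auto simp: cst_def fun_eq_iff fp_smult_def)

lemma sum_smult_mon_apply:
  assumes "finite S"
  shows "(\<Sum>w\<in>S. fp_smult (f w) (mon w)) v = (if v \<in> S then f v else 0)"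
proof -
  have "(\<Sum>w\<in>S. fp_smult (f w) (mon w)) v = (\<Sum>w\<in>S. if w = v then f w else 0)"
    unfolding sum_fun_apply by (rule sum.cong) (auto simp: fp_smult_apply mon_def)
  also have "\<dots> = (if v \<in> S then f v else 0)" by (rule sum.delta[OF assms])
  finally show ?thesis .
qed

lemma monomial_decomp:
  assumes "finite (fsupp p)"
  shows "p = (\<Sum>w\<in>fsupp p. fp_smult (p w) (mon w))"
proof
  fix v show "p v = (\<Sum>w\<in>fsupp p. fp_smult (p w) (mon w)) v"
    using assms by (subst sum_smult_mon_apply) (auto simp: fsupp_def)
qed

lemma fp_mult_expand:
  assumes "finite (fsupp p)" "finite (fsupp q)"
  shows "fp_mult p q = (\<Sum>u\<in>fsupp p. \<Sum>v\<in>fsupp q. fp_smult (p u * q v) (mon (u @ v)))"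
proof -
  have "fp_mult (\<Sum>u\<in>fsupp p. fp_smult (p u) (mon u)) (\<Sum>v\<in>fsupp q. fp_smult (q v) (mon v))
      = (\<Sum>u\<in>fsupp p. \<Sum>v\<in>fsupp q. fp_smult (p u * q v) (mon (u @ v)))"
    unfolding fp_mult_sum_left unfolding fp_mult_sum_right
    by (simp add: fp_mult_smult_left fp_mult_smult_right fp_mult_mon mult.commute)
  then show ?thesis using monomial_decomp[OF assms(1)] monomial_decomp[OF assms(2)] by simp
qed

lemma fpolys_iff: "p \<in> fpolys X \<longleftrightarrow> finite (fsupp p) \<and> (\<forall>w\<in>fsupp p. set w \<subseteq> X)"
  by (auto simp: fpolys_def fsupp_def)

lemma fpolys_finite: "p \<in> fpolys X \<Longrightarrow> finite (fsupp p)"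
  by (simp add: fpolys_iff)

lemma fpolys_set: "p \<in> fpolys X \<Longrightarrow> p w \<noteq> 0 \<Longrightarrow> set w \<subseteq> X"
  by (simp add: fpolys_def)

lemma fpolys_zero[simp]: "0 \<in> fpolys X"
  by (simp add: fpolys_def zero_fun_apply)

lemma fsupp_add: "fsupp (p + q) \<subseteq> fsupp p \<union> fsupp q"
  by (auto simp: fsupp_def plus_fun_apply)

lemma fsupp_smult: "fsupp (fp_smult c p) \<subseteq> fsupp p"
  by (auto simp: fsupp_def fp_smult_def)

lemma fpolys_add[simp]: "p \<in> fpolys X \<Longrightarrow> q \<in> fpolys X \<Longrightarrow> p + q \<in> fpolys X"
  using fsupp_add[of p q] by (auto simp: fpolys_iff intro: finite_subset)

lemma fpolys_smult[simp]: "p \<in> fpolys X \<Longrightarrow> fp_smult c p \<in> fpolys X"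
  using fsupp_smult[of c p] by (auto simp: fpolys_iff intro: finite_subset)

lemma fpolys_sum[simp]: "(\<And>i. i \<in> A \<Longrightarrow> f i \<in> fpolys X) \<Longrightarrow> (\<Sum>i\<in>A. f i) \<in> fpolys X"
  by (induction A rule: infinite_finite_induct) auto

lemma fsupp_mon: "fsupp (mon w) \<subseteq> {w}"
  by (auto simp: fsupp_def mon_def)

lemma fpolys_mon[simp]: "set w \<subseteq> X \<Longrightarrow> mon w \<in> fpolys X"
  using fsupp_mon[of w] by (auto simp: fpolys_iff intro: finite_subset)

lemma fpolys_cst[simp]: "cst c \<in> fpolys X"
proof -
  have "fsupp (cst c) \<subseteq> {[]}" by (auto simp: fsupp_def cst_def)
  then show ?thesis by (auto simp: fpolys_iff intro: finite_subset)
qed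

lemma fpolys_one[simp]: "fp_one \<in> fpolys X"
  by (metis cst_one fpolys_cst)

lemma fpolys_diff[simp]: "p \<in> fpolys X \<Longrightarrow> q \<in> fpolys X \<Longrightarrow> p - q \<in> fpolys X"
proof -
  assume "p \<in> fpolys X" "q \<in> fpolys X"
  moreover have "p - q = p + fp_smult (-1) q" by (auto simp: fp_smult_def fun_eq_iff plus_fun_apply)
  ultimately show ?thesis by (metis fpolys_add fpolys_smult)
qed

lemma fpolys_mono: "X \<subseteq> Y \<Longrightarrow> p \<in> fpolys X \<Longrightarrow> p \<in> fpolys Y"
  by (auto simp: fpolys_def)

lemma fp_mult_nonzero:
  assumes "fp_mult p q w \<noteq> 0"
  shows "\<exists>u v. u @ v = w \<and> p u \<noteq> 0 \<and> q v \<noteq> 0"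
proof (rule ccontr)
  assume "\<not> ?thesis"
  then have "\<forall>(u, v)\<in>splits w. p u * q v = 0" by (auto simp: splits_def)
  then have "fp_mult p q w = 0" unfolding fp_mult_splits by (intro sum.neutral) auto
  with assms show False by simp
qed

lemma fpolys_mult[simp]:
  assumes p: "p \<in> fpolys X" and q: "q \<in> fpolys X"
  shows "fp_mult p q \<in> fpolys X"
proof -
  have s: "fsupp (fp_mult p q) \<subseteq> (\<lambda>(u, v). u @ v) ` (fsupp p \<times> fsupp q)"
    by (auto simp: fsupp_def dest!: fp_mult_nonzero)
  have "finite ((\<lambda>(u, v). u @ v) ` (fsupp p \<times> fsupp q))"
    using p q by (simp add: fpolys_iff)
  then have "finite (fsupp (fp_mult p q))" by (rule finite_subset[OF s])
  moreover have "set w \<subseteq> X" if "w \<in> fsupp (fp_mult p q)" for w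
    using that fpolys_set[OF p] fpolys_set[OF q] by (fastforce simp: fsupp_def dest!: fp_mult_nonzero)
  ultimately show ?thesis by (simp add: fpolys_iff)
qed

lemma fpolys_empty: "p \<in> fpolys {} \<Longrightarrow> p = cst (p [])"
  by (auto simp: fpolys_def cst_def fun_eq_iff)

section \<open>Substitution homomorphisms\<close>

fun subst_word :: "('y \<Rightarrow> ('x, 'k::field) fpoly) \<Rightarrow> 'y list \<Rightarrow> ('x, 'k) fpoly" where
  "subst_word g [] = fp_one"
| "subst_word g (x # w) = fp_mult (g x) (subst_word g w)"

definition subst :: "('y \<Rightarrow> ('x, 'k::field) fpoly) \<Rightarrow> ('y, 'k) fpoly \<Rightarrow> ('x, 'k) fpoly" where
  "subst g p = (\<Sum>w\<in>fsupp p. fp_smult (p w) (subst_word g w))"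

definition subst_hom :: "('x \<Rightarrow> ('x, 'k::field) fpoly) \<Rightarrow> 'x set \<Rightarrow> ('x, 'k) fpoly \<Rightarrow> ('x, 'k) fpoly" where
  "subst_hom g X = restr X (subst g)"

lemma restr_in[simp]: "p \<in> fpolys X \<Longrightarrow> restr X f p = f p"
  by (simp add: restr_def)

lemma restr_out[simp]: "p \<notin> fpolys X \<Longrightarrow> restr X f p = undefined"
  by (simp add: restr_def)

lemma restr_cong: "(\<And>p. p \<in> fpolys X \<Longrightarrow> f p = g p) \<Longrightarrow> restr X f = restr X g"
  by (auto simp: restr_def fun_eq_iff)

lemma subst_word_append: "subst_word g (u @ v) = fp_mult (subst_word g u) (subst_word g v)"
  by (induction u) (simp_all add: fp_mult_assoc)

lemma subst_word_in_fpolys: "(\<And>x. x \<in> set w \<Longrightarrow> g x \<in> fpolys Y) \<Longrightarrow> subst_word g w \<in> fpolys Y"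
  by (induction w) auto

lemma subst_superset:
  assumes "finite S" "fsupp p \<subseteq> S"
  shows "subst g p = (\<Sum>w\<in>S. fp_smult (p w) (subst_word g w))"
  unfolding subst_def
  by (rule sum.mono_neutral_left) (use assms in \<open>auto simp: fsupp_def\<close>)

lemma subst_add:
  assumes "finite (fsupp p)" "finite (fsupp q)"
  shows "subst g (p + q) = subst g p + subst g q"
proof -
  let ?S = "fsupp p \<union> fsupp q"
  have f: "finite ?S" using assms by simp
  have "subst g (p + q) = (\<Sum>w\<in>?S. fp_smult ((p + q) w) (subst_word g w))"
    by (rule subst_superset[OF f fsupp_add])
  also have "\<dots> = (\<Sum>w\<in>?S. fp_smult (p w) (subst_word g w)) + (\<Sum>w\<in>?S. fp_smult (q w) (subst_word g w))"
    by (simp add: plus_fun_apply fp_smult_add_left sum.distrib)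
  also have "\<dots> = subst g p + subst g q"
    by (simp add: subst_superset[OF f])
  finally show ?thesis .
qed

lemma subst_smult:
  assumes "finite (fsupp p)"
  shows "subst g (fp_smult c p) = fp_smult c (subst g p)"
proof -
  have "subst g (fp_smult c p) = (\<Sum>w\<in>fsupp p. fp_smult (c * p w) (subst_word g w))"
    by (subst subst_superset[OF assms fsupp_smult]) (simp add: fp_smult_def)
  also have "\<dots> = fp_smult c (subst g p)"
    by (simp add: subst_def fp_smult_sum)
  finally show ?thesis .
qed

lemma finite_fsupp_sum:
  "(\<And>i. i \<in> A \<Longrightarrow> finite (fsupp (f i))) \<Longrightarrow> finite (fsupp (\<Sum>i\<in>A. f i))"
proof (induction A rule: infinite_finite_induct)
  case (insert x F)
  have "fsupp (\<Sum>i\<in>insert x F. f i) \<subseteq> fsupp (f x) \<union> fsupp (\<Sum>i\<in>F. f i)"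
    using insert.hyps by (simp add: fsupp_add)
  then show ?case using insert by (meson finite_UnI finite_subset insertCI)
qed (auto simp: fsupp_def zero_fun_apply)

lemma subst_sum:
  "(\<And>i. i \<in> A \<Longrightarrow> finite (fsupp (f i))) \<Longrightarrow> subst g (\<Sum>i\<in>A. f i) = (\<Sum>i\<in>A. subst g (f i))"
proof (induction A rule: infinite_finite_induct)
  case (insert x F)
  then show ?case by (simp add: subst_add finite_fsupp_sum)
qed (auto simp: subst_def fsupp_def zero_fun_apply)

lemma finite_fsupp_mon[simp]: "finite (fsupp (mon w))"
  using fsupp_mon by (rule finite_subset) simp

lemma finite_fsupp_smult_mon[simp]: "finite (fsupp (fp_smult c (mon w)))"
  by (rule finite_subset[OF fsupp_smult]) simp

lemma subst_mon: "subst g (mon w) = subst_word g w"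
proof -
  have "subst g (mon w) = (\<Sum>v\<in>{w}. fp_smult (mon w v) (subst_word g v))"
    by (rule subst_superset[OF _ fsupp_mon]) simp
  then show ?thesis by (simp add: mon_def)
qed

lemma subst_mult:
  assumes "finite (fsupp p)" "finite (fsupp q)"
  shows "subst g (fp_mult p q) = fp_mult (subst g p) (subst g q)"
proof -
  have "subst g (fp_mult p q) = (\<Sum>u\<in>fsupp p. \<Sum>v\<in>fsupp q. fp_smult (p u * q v) (subst_word g (u @ v)))"
    by (simp add: fp_mult_expand[OF assms] subst_sum finite_fsupp_sum subst_smult subst_mon)
  also have "\<dots> = fp_mult (subst g p) (subst g q)"
    unfolding subst_def fp_mult_sum_left unfolding fp_mult_sum_right
    by (simp add: fp_mult_smult_left fp_mult_smult_right subst_word_append mult.commute)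
  finally show ?thesis .
qed

lemma subst_cst[simp]: "subst g (cst c) = cst c"
  by (simp add: cst_eq fp_one_mon subst_smult subst_mon)

lemma subst_in_fpolys:
  assumes "p \<in> fpolys X" "\<And>x. x \<in> X \<Longrightarrow> g x \<in> fpolys Y"
  shows "subst g p \<in> fpolys Y"
  unfolding subst_def
  using assms by (intro fpolys_sum fpolys_smult subst_word_in_fpolys) (auto simp: fsupp_def dest: fpolys_set)

lemma alg_hom_subst_hom:
  assumes "\<And>x. x \<in> X \<Longrightarrow> g x \<in> fpolys Y"
  shows "alg_hom X Y (subst_hom g X)"
  unfolding alg_hom_def subst_hom_def
  using assms by (auto simp: subst_in_fpolys subst_add subst_mult subst_smult fpolys_finite fp_add_eq
      cst_one[symmetric])

lemma subst_hom_mon1: "x \<in> X \<Longrightarrow> subst_hom g X (mon [x]) = g x"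
  by (simp add: subst_hom_def subst_mon)

lemma subst_hom_cong:
  fixes g g' :: "'x \<Rightarrow> ('x, 'k::field) fpoly"
  assumes "\<And>x. x \<in> X \<Longrightarrow> g x = g' x"
  shows "subst_hom g X = subst_hom g' X"
  unfolding subst_hom_def
proof (rule restr_cong)
  fix p :: "('x, 'k) fpoly" assume p: "p \<in> fpolys X"
  have "subst_word g w = subst_word g' w" if "w \<in> fsupp p" for w
  proof -
    have "set w \<subseteq> X" using that p by (auto simp: fsupp_def dest: fpolys_set)
    then show ?thesis using assms by (induction w) auto
  qed
  then show "subst g p = subst g' p" by (simp add: subst_def)
qed

lemma alg_hom_in: "alg_hom X Y f \<Longrightarrow> p \<in> fpolys X \<Longrightarrow> f p \<in> fpolys Y"
  by (simp add: alg_hom_def)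

lemma alg_hom_add: "alg_hom X Y f \<Longrightarrow> p \<in> fpolys X \<Longrightarrow> q \<in> fpolys X \<Longrightarrow> f (p + q) = f p + f q"
  by (simp add: alg_hom_def fp_add_eq)

lemma alg_hom_mult: "alg_hom X Y f \<Longrightarrow> p \<in> fpolys X \<Longrightarrow> q \<in> fpolys X \<Longrightarrow> f (fp_mult p q) = fp_mult (f p) (f q)"
  by (simp add: alg_hom_def)

lemma alg_hom_smult: "alg_hom X Y f \<Longrightarrow> p \<in> fpolys X \<Longrightarrow> f (fp_smult c p) = fp_smult c (f p)"
  by (simp add: alg_hom_def)

lemma alg_hom_one: "alg_hom X Y f \<Longrightarrow> f fp_one = fp_one"
  by (simp add: alg_hom_def)

lemma alg_hom_out: "alg_hom X Y f \<Longrightarrow> p \<notin> fpolys X \<Longrightarrow> f p = undefined"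
  by (simp add: alg_hom_def)

lemma alg_hom_cst: "alg_hom X Y f \<Longrightarrow> f (cst c) = cst c"
  by (simp add: cst_eq alg_hom_smult alg_hom_one)

lemma alg_hom_sum:
  "alg_hom X Y f \<Longrightarrow> (\<And>i. i \<in> A \<Longrightarrow> h i \<in> fpolys X) \<Longrightarrow> f (\<Sum>i\<in>A. h i) = (\<Sum>i\<in>A. f (h i))"
proof (induction A rule: infinite_finite_induct)
  case (insert x F)
  then show ?case by (simp add: alg_hom_add)
qed (auto simp: alg_hom_cst[where c=0, simplified])

lemma alg_hom_mon:
  "alg_hom X Y f \<Longrightarrow> set w \<subseteq> X \<Longrightarrow> f (mon w) = subst_word (\<lambda>x. f (mon [x])) w"
proof (induction w)
  case Nil
  then show ?case by (simp add: fp_one_mon[symmetric] alg_hom_one)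
next
  case (Cons x w)
  have e: "mon (x # w) = fp_mult (mon [x]) (mon w)" by (simp add: fp_mult_mon)
  have "mon [x] \<in> fpolys X" "mon w \<in> fpolys X" using Cons.prems by auto
  then have "f (mon (x # w)) = fp_mult (f (mon [x])) (f (mon w))"
    unfolding e by (rule alg_hom_mult[OF Cons.prems(1)])
  then show ?case using Cons by simp
qed

lemma alg_hom_eq_subst_hom:
  assumes f: "alg_hom X Y f"
  shows "f = subst_hom (\<lambda>x. f (mon [x])) X"
proof
  fix p show "f p = subst_hom (\<lambda>x. f (mon [x])) X p"
  proof (cases "p \<in> fpolys X")
    case True
    have sw: "set w \<subseteq> X" if "w \<in> fsupp p" for w
      using that True by (auto simp: fsupp_def dest: fpolys_set)
    have "f p = f (\<Sum>w\<in>fsupp p. fp_smult (p w) (mon w))"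
      using monomial_decomp[OF fpolys_finite[OF True]] by simp
    also have "\<dots> = (\<Sum>w\<in>fsupp p. fp_smult (p w) (subst_word (\<lambda>x. f (mon [x])) w))"
      using sw by (simp add: alg_hom_sum[OF f] alg_hom_smult[OF f] alg_hom_mon[OF f])
    finally show ?thesis using True by (simp add: subst_hom_def subst_def)
  qed (simp add: subst_hom_def alg_hom_out[OF f])
qed

lemma alg_hom_eqI:
  assumes "alg_hom X Y f1" "alg_hom X Y f2" "\<And>x. x \<in> X \<Longrightarrow> f1 (mon [x]) = f2 (mon [x])"
  shows "f1 = f2"
  using alg_hom_eq_subst_hom[OF assms(1)] alg_hom_eq_subst_hom[OF assms(2)]
    subst_hom_cong[of X "\<lambda>x. f1 (mon [x])" "\<lambda>x. f2 (mon [x])"] assms(3)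
  by metis

lemma alg_hom_comp:
  assumes "alg_hom X Y f" "alg_hom Y Z g"
  shows "alg_hom X Z (restr X (g \<circ> f))"
  using assms unfolding alg_hom_def by (auto simp: fp_add_eq)

lemma alg_hom_id: "alg_hom X X (restr X id)"
  unfolding alg_hom_def by (auto simp: fp_add_eq)

lemma alg_hom_inv_into:
  fixes f :: "('x, 'k::field) fpoly \<Rightarrow> ('x, 'k) fpoly"
  assumes h: "alg_hom X Y f" and b: "bij_betw f (fpolys X) (fpolys Y)"
  shows "alg_hom Y X (restr Y (inv_into (fpolys X) f))"
proof -
  let ?g = "inv_into (fpolys X) f"
  have gm: "?g q \<in> fpolys X" if "q \<in> fpolys Y" for q using that b bij_betwE bij_betw_inv_into by blast
  have fg: "f (?g q) = q" if "q \<in> fpolys Y" for q using that b by (simp add: bij_betw_inv_into_right)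
  have gf: "?g (f p) = p" if "p \<in> fpolys X" for p using that b by (simp add: bij_betw_inv_into_left)
  show ?thesis
    unfolding alg_hom_def
  proof (intro conjI ballI allI impI)
    fix q q' :: "('x, 'k) fpoly" assume q: "q \<in> fpolys Y" and q': "q' \<in> fpolys Y"
    have "?g (q + q') = ?g q + ?g q'"
      using gf[of "?g q + ?g q'"] gm q q' fg by (simp add: alg_hom_add[OF h])
    then show "restr Y ?g (fp_add q q') = fp_add (restr Y ?g q) (restr Y ?g q')"
      using q q' by (simp add: fp_add_eq)
    have "?g (fp_mult q q') = fp_mult (?g q) (?g q')"
      using gf[of "fp_mult (?g q) (?g q')"] gm q q' fg by (simp add: alg_hom_mult[OF h])
    then show "restr Y ?g (fp_mult q q') = fp_mult (restr Y ?g q) (restr Y ?g q')"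
      using q q' by simp
  next
    fix c and q :: "('x, 'k) fpoly" assume q: "q \<in> fpolys Y"
    have "?g (fp_smult c q) = fp_smult c (?g q)"
      using gf[of "fp_smult c (?g q)"] gm q fg by (simp add: alg_hom_smult[OF h])
    then show "restr Y ?g (fp_smult c q) = fp_smult c (restr Y ?g q)" using q by simp
  next
    show "restr Y ?g fp_one = fp_one" using gf[of fp_one] alg_hom_one[OF h] by simp
  qed (use gm in simp_all)
qed

definition ev :: "('x, 'k::field) fpoly \<Rightarrow> 'k \<Rightarrow> 'k" where
  "ev p a = (\<Sum>w\<in>fsupp p. p w * a ^ length w)"

lemma subst_word_cst: "subst_word (\<lambda>_. cst a) w = cst (a ^ length w)"
  by (induction w) (simp_all add: cst_one cst_mult)

lemma subst_cst_eq_ev: "subst (\<lambda>_. cst a) p = cst (ev p a)"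
  by (simp add: subst_def ev_def subst_word_cst smult_cst cst_sum)

lemma ev_via_subst:
  fixes p :: "('x, 'k::field) fpoly"
  shows "ev p a = subst (\<lambda>_. cst a :: ('x, 'k::field) fpoly) p []"
  by (simp only: subst_cst_eq_ev) (simp add: cst_def)

lemma ev_add: "finite (fsupp p) \<Longrightarrow> finite (fsupp q) \<Longrightarrow> ev (p + q) a = ev p a + ev q a"
  by (simp only: ev_via_subst subst_add plus_fun_apply)

lemma ev_smult: "finite (fsupp p) \<Longrightarrow> ev (fp_smult c p) a = c * ev p a"
  by (simp only: ev_via_subst subst_smult fp_smult_apply)

lemma ev_cst[simp]: "ev (cst c :: ('x, 'k::field) fpoly) a = c"
  by (simp only: ev_via_subst subst_cst) (simp add: cst_def)

lemma ev_mon1[simp]: "ev (mon [z] :: ('x, 'k::field) fpoly) a = a"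
  by (simp only: ev_via_subst subst_mon subst_word.simps fp_mult_cst_left fp_mult_one_right)
     (simp add: cst_def)

lemma subst_word_diag:
  "subst_word (\<lambda>v. fp_smult (c v) (mon [v])) w = fp_smult (prod_list (map c w)) (mon w)"
  by (induction w)
     (simp_all add: fp_one_mon fp_mult_smult_left fp_mult_smult_right fp_mult_mon mult.commute)

lemma subst_hom_diag_apply:
  assumes "p \<in> fpolys X"
  shows "subst_hom (\<lambda>v. fp_smult (c v) (mon [v])) X p w = prod_list (map c w) * p w"
proof -
  have "subst_hom (\<lambda>v. fp_smult (c v) (mon [v])) X p w
      = (\<Sum>u\<in>fsupp p. fp_smult (p u * prod_list (map c u)) (mon u)) w"
    using assms by (simp add: subst_hom_def subst_def subst_word_diag)
  also have "\<dots> = prod_list (map c w) * p w"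
    by (subst sum_smult_mon_apply[OF fpolys_finite[OF assms]]) (auto simp: fsupp_def)
  finally show ?thesis .
qed

section \<open>One variable over an infinite field\<close>

lemma replicate_of_set: "set u \<subseteq> {z} \<Longrightarrow> u = replicate (length u) z"
  by (metis replicate_length_same singletonD subsetD)

lemma fp_mult_commute_single:
  assumes p: "p \<in> fpolys {z}" and q: "q \<in> fpolys {z}"
  shows "fp_mult p q = fp_mult q p"
proof -
  have fp: "finite (fsupp p)" "finite (fsupp q)" using p q by (auto simp: fpolys_finite)
  have c: "u @ v = v @ u" if "u \<in> fsupp p" "v \<in> fsupp q" for u v
  proof -
    have "set u \<subseteq> {z}" "set v \<subseteq> {z}" using that p q by (auto simp: fsupp_def dest: fpolys_set)
    then have "u = replicate (length u) z" "v = replicate (length v) z" by (auto intro: replicate_of_set)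
    then show ?thesis by (metis replicate_add add.commute)
  qed
  have "fp_mult p q = (\<Sum>u\<in>fsupp p. \<Sum>v\<in>fsupp q. fp_smult (q v * p u) (mon (v @ u)))"
    unfolding fp_mult_expand[OF fp] by (intro sum.cong refl) (simp add: c[symmetric] mult.commute)
  also have "\<dots> = fp_mult q p"
    unfolding fp_mult_expand[OF fp(2) fp(1)] by (rule sum.swap)
  finally show ?thesis .
qed

definition to_poly :: "('x, 'k::field) fpoly \<Rightarrow> 'k poly" where
  "to_poly p = (\<Sum>w\<in>fsupp p. monom (p w) (length w))"

lemma poly_to_poly: "poly (to_poly p) a = ev p a"
  by (simp add: to_poly_def poly_sum poly_monom ev_def)

lemma coeff_to_poly:
  assumes p: "p \<in> fpolys {z}"
  shows "coeff (to_poly p) n = p (replicate n z)"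
proof -
  have "coeff (to_poly p) n = (\<Sum>w\<in>fsupp p. if w = replicate n z then p w else 0)"
    unfolding to_poly_def coeff_sum
  proof (rule sum.cong[OF refl])
    fix w assume "w \<in> fsupp p"
    then have "set w \<subseteq> {z}" using p by (auto simp: fsupp_def dest: fpolys_set)
    then have "w = replicate (length w) z" by (rule replicate_of_set)
    then have "(length w = n) = (w = replicate n z)" by auto
    then show "coeff (monom (p w) (length w)) n = (if w = replicate n z then p w else 0)" by simp
  qed
  also have "\<dots> = p (replicate n z)"
    using fpolys_finite[OF p] by (simp add: sum.delta fsupp_def)
  finally show ?thesis .
qed

lemma to_poly_inj:
  assumes p: "p \<in> fpolys {z}" and q: "q \<in> fpolys {z}" and e: "to_poly p = to_poly q"
  shows "p = q"
proof
  fix w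
  show "p w = q w"
  proof (cases "set w \<subseteq> {z}")
    case True
    then have w: "replicate (length w) z = w" by (rule replicate_of_set[symmetric])
    have "p w = coeff (to_poly p) (length w)" using coeff_to_poly[OF p, of "length w"] w by simp
    also have "\<dots> = q w" using e coeff_to_poly[OF q, of "length w"] w by simp
    finally show ?thesis .
  next
    case False
    then have "p w = 0" "q w = 0" using fpolys_set[OF p] fpolys_set[OF q] by blast+
    then show ?thesis by simp
  qed
qed

lemma poly_eqI_infinite:
  assumes inf: "infinite (UNIV :: 'k::field set)" and e: "\<And>a. poly P a = poly Q (a :: 'k)"
  shows "P = Q"
proof (rule ccontr)
  assume "P \<noteq> Q"
  then have "finite {x. poly (P - Q) x = 0}" by (intro poly_roots_finite) simp
  moreover have "{x. poly (P - Q) x = 0} = UNIV" using e by simp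
  ultimately show False using inf by simp
qed

lemma fpolys_single_eqI:
  assumes "infinite (UNIV :: 'k::field set)"
    and "p \<in> fpolys {z}" "q \<in> fpolys {z}" "\<And>a. ev p a = ev q (a :: 'k)"
  shows "p = q"
  using assms by (intro to_poly_inj poly_eqI_infinite) (simp_all add: poly_to_poly)

lemma ev_affine_if_left_inverse:
  assumes inf: "infinite (UNIV :: 'k::field set)"
    and q: "q \<in> fpolys {z}" and "\<And>t. ev q (ev q' t) = (t :: 'k)"
  shows "\<exists>\<alpha> \<beta>. \<alpha> \<noteq> 0 \<and> (\<forall>t. ev q t = \<alpha> * t + \<beta>)"
proof -
  have "pcompose (to_poly q) (to_poly q') = [:0, 1:]"
    using assms by (intro poly_eqI_infinite[OF inf]) (simp add: poly_pcompose poly_to_poly)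
  then have "degree (pcompose (to_poly q) (to_poly q')) = 1" by simp
  then have "degree (to_poly q) * degree (to_poly q') = 1" by (simp only: degree_pcompose)
  then have d: "degree (to_poly q) = 1" by simp
  then have "to_poly q \<noteq> 0" by auto
  then have "coeff (to_poly q) 1 \<noteq> 0" using d leading_coeff_neq_0 by metis
  moreover have "\<forall>t. ev q t = coeff (to_poly q) 1 * t + coeff (to_poly q) 0"
    by (simp add: poly_to_poly[symmetric] poly_altdef d)
  ultimately show ?thesis by blast
qed

lemma power_eq_self_imp_eq_1:
  assumes inf: "infinite (UNIV :: 'k::field set)" and h: "\<And>l :: 'k. l ^ n = l"
  shows "n = 1"
proof -
  have "monom (1 :: 'k) n = [:0, 1:]"
    using h by (intro poly_eqI_infinite[OF inf]) (simp add: poly_monom)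
  then have "degree (monom (1 :: 'k) n) = degree [:0, (1 :: 'k):]" by simp
  then show ?thesis by (simp add: degree_monom_eq)
qed

section \<open>Field automorphisms and semi-affine bijections\<close>

lemma field_aut_add: "field_aut \<phi> \<Longrightarrow> \<phi> (a + b) = \<phi> a + \<phi> b"
  and field_aut_mult: "field_aut \<phi> \<Longrightarrow> \<phi> (a * b) = \<phi> a * \<phi> b"
  and field_aut_one: "field_aut \<phi> \<Longrightarrow> \<phi> 1 = 1"
  and field_aut_bij: "field_aut \<phi> \<Longrightarrow> bij \<phi>"
  by (simp_all add: field_aut_def)

lemma field_aut_zero: "field_aut \<phi> \<Longrightarrow> \<phi> 0 = 0"
  using field_aut_add[of \<phi> 0 0] by (metis add_cancel_right_right add_0)

lemma field_aut_inv_right: "field_aut \<phi> \<Longrightarrow> \<phi> (inv \<phi> a) = a"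
  using field_aut_bij[of \<phi>] by (simp add: bij_def surj_f_inv_f)

lemma field_aut_inv_left: "field_aut \<phi> \<Longrightarrow> inv \<phi> (\<phi> a) = a"
  using field_aut_bij[of \<phi>] by (simp add: bij_def inv_f_f)

lemma field_aut_eq_iff: "field_aut \<phi> \<Longrightarrow> \<phi> a = \<phi> b \<longleftrightarrow> a = b"
  using field_aut_bij[of \<phi>] by (auto simp: bij_def inj_eq)

lemma field_aut_eq_0_iff: "field_aut \<phi> \<Longrightarrow> \<phi> a = 0 \<longleftrightarrow> a = 0"
  using field_aut_eq_iff[of \<phi> a 0] by (simp add: field_aut_zero)

lemma field_aut_sum: "field_aut \<phi> \<Longrightarrow> \<phi> (\<Sum>i\<in>A. f i) = (\<Sum>i\<in>A. \<phi> (f i))"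
  by (induction A rule: infinite_finite_induct) (simp_all add: field_aut_zero field_aut_add)

lemma field_aut_power: "field_aut \<phi> \<Longrightarrow> \<phi> (a ^ n) = \<phi> a ^ n"
  by (induction n) (simp_all add: field_aut_one field_aut_mult)

lemma field_aut_inv:
  assumes f: "field_aut \<phi>"
  shows "field_aut (inv \<phi>)"
  unfolding field_aut_def
proof (intro conjI allI)
  show "bij (inv \<phi>)" using f by (simp add: field_aut_bij bij_imp_bij_inv)
  fix a b
  show "inv \<phi> (a + b) = inv \<phi> a + inv \<phi> b"
    by (subst field_aut_eq_iff[OF f, symmetric]) (simp add: f field_aut_add field_aut_inv_right)
  show "inv \<phi> (a * b) = inv \<phi> a * inv \<phi> b"
    by (subst field_aut_eq_iff[OF f, symmetric]) (simp add: f field_aut_mult field_aut_inv_right)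
next
  show "inv \<phi> 1 = 1"
    by (subst field_aut_eq_iff[OF f, symmetric]) (simp add: f field_aut_one field_aut_inv_right)
qed

lemma bij_affine_translate_imp_additive:
  fixes \<kappa> :: "'k::field \<Rightarrow> 'k"
  assumes bk: "bij \<kappa>" and ab: "\<And>a. \<kappa> (a + c) = \<alpha> * \<kappa> a + \<beta>"
  shows "\<kappa> (a + c) = \<kappa> a + \<kappa> c - \<kappa> 0"
proof (cases "\<alpha> = 1")
  case True
  then show ?thesis using ab[of 0] ab[of a] by simp
next
  case False
  \<comment> \<open>otherwise the affine map \<open>t \<mapsto> \<alpha> t + \<beta>\<close> has a fixed point, which \<open>\<kappa>\<close> transports to a fixed point of \<open>a \<mapsto> a + c\<close>\<close>
  obtain a0 where a0: "\<kappa> a0 = \<beta> / (1 - \<alpha>)" using bk unfolding bij_def by (metis surjD)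
  have "\<kappa> (a0 + c) = \<alpha> * (\<beta> / (1 - \<alpha>)) + \<beta>" using ab a0 by simp
  also have "\<dots> = \<kappa> a0" using False a0 by (simp add: field_simps)
  finally have "c = 0" using bk by (simp add: bij_def inj_eq)
  then show ?thesis by simp
qed

lemma affine_scale_imp_multiplicative:
  fixes \<kappa> :: "'k::field \<Rightarrow> 'k"
  assumes gd: "\<And>a. \<kappa> (l * a) = \<gamma> * \<kappa> a + \<delta>"
  shows "(\<kappa> (l * a) - \<kappa> 0) * (\<kappa> 1 - \<kappa> 0) = (\<kappa> l - \<kappa> 0) * (\<kappa> a - \<kappa> 0)"
proof -
  have z: "\<kappa> 0 = \<gamma> * \<kappa> 0 + \<delta>" using gd[of 0] by simp
  have e1: "\<kappa> (l * a) - \<kappa> 0 = \<gamma> * (\<kappa> a - \<kappa> 0)" using gd[of a] z by (simp add: algebra_simps)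
  have e2: "\<kappa> l - \<kappa> 0 = \<gamma> * (\<kappa> 1 - \<kappa> 0)" using gd[of 1] z by (simp add: algebra_simps)
  show ?thesis unfolding e1 e2 by (simp add: algebra_simps)
qed

lemma semiaffine_bij_decomp:
  fixes \<kappa> :: "'k::field \<Rightarrow> 'k"
  assumes bk: "bij \<kappa>"
    and tr: "\<And>c. \<exists>\<alpha> \<beta>. \<forall>a. \<kappa> (a + c) = \<alpha> * \<kappa> a + \<beta>"
    and sc: "\<And>l. l \<noteq> 0 \<Longrightarrow> \<exists>\<gamma> \<delta>. \<forall>a. \<kappa> (l * a) = \<gamma> * \<kappa> a + \<delta>"
  shows "\<exists>\<phi> k1 k0. field_aut \<phi> \<and> k1 \<noteq> 0 \<and> (\<forall>a. \<kappa> a = k1 * \<phi> a + k0)"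
proof -
  define k0 where "k0 = \<kappa> 0"
  define k1 where "k1 = \<kappa> 1 - k0"
  define \<phi> where "\<phi> a = (\<kappa> a - k0) / k1" for a
  have k1: "k1 \<noteq> 0" using bk by (auto simp: k1_def k0_def bij_def inj_eq)
  have add: "\<kappa> (a + b) - k0 = (\<kappa> a - k0) + (\<kappa> b - k0)" for a b
  proof -
    obtain \<alpha> \<beta> where "\<And>a. \<kappa> (a + b) = \<alpha> * \<kappa> a + \<beta>" using tr by blast
    from bij_affine_translate_imp_additive[OF bk this] show ?thesis by (simp add: k0_def)
  qed
  have mul: "(\<kappa> (a * b) - k0) * k1 = (\<kappa> a - k0) * (\<kappa> b - k0)" for a b
  proof (cases "a = 0")
    case False
    then obtain \<gamma> \<delta> where "\<And>b. \<kappa> (a * b) = \<gamma> * \<kappa> b + \<delta>" using sc by blast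
    then show ?thesis unfolding k0_def k1_def by (rule affine_scale_imp_multiplicative)
  qed (simp add: k0_def)
  have "field_aut \<phi>"
    unfolding field_aut_def
  proof (intro conjI allI)
    fix a b
    show "\<phi> (a + b) = \<phi> a + \<phi> b" unfolding \<phi>_def add by (rule add_divide_distrib)
    have "\<phi> (a * b) = ((\<kappa> (a * b) - k0) * k1) / (k1 * k1)" using k1 by (simp add: \<phi>_def)
    then show "\<phi> (a * b) = \<phi> a * \<phi> b" by (simp add: mul \<phi>_def)
  next
    show "\<phi> 1 = 1" using k1 by (simp add: \<phi>_def k1_def)
    show "bij \<phi>"
    proof (rule bijI)
      show "inj \<phi>" using k1 bk by (auto simp: \<phi>_def bij_def inj_def)
      have "\<phi> (inv \<kappa> (t * k1 + k0)) = t" for t using k1 bk by (simp add: \<phi>_def bij_is_surj surj_f_inv_f)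
      then show "surj \<phi>" by (rule surjI)
    qed
  qed
  moreover have "\<forall>a. \<kappa> a = k1 * \<phi> a + k0" using k1 by (simp add: \<phi>_def)
  ultimately show ?thesis using k1 by blast
qed

section \<open>Coefficient maps and the mirror map\<close>

lemma coeff_map_apply: "coeff_map \<phi> p w = \<phi> (p w)"
  by (simp add: coeff_map_def)

lemma coeff_map_add: "field_aut \<phi> \<Longrightarrow> coeff_map \<phi> (p + q) = coeff_map \<phi> p + coeff_map \<phi> q"
  by (simp add: coeff_map_def fun_eq_iff plus_fun_apply field_aut_add)

lemma coeff_map_smult: "field_aut \<phi> \<Longrightarrow> coeff_map \<phi> (fp_smult c p) = fp_smult (\<phi> c) (coeff_map \<phi> p)"
  by (simp add: coeff_map_def fun_eq_iff fp_smult_def field_aut_mult)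

lemma coeff_map_mult: "field_aut \<phi> \<Longrightarrow> coeff_map \<phi> (fp_mult p q) = fp_mult (coeff_map \<phi> p) (coeff_map \<phi> q)"
  by (simp add: coeff_map_def fun_eq_iff fp_mult_def field_aut_mult field_aut_sum)

lemma coeff_map_one: "field_aut \<phi> \<Longrightarrow> coeff_map \<phi> fp_one = fp_one"
  by (simp add: coeff_map_def fun_eq_iff fp_one_def field_aut_one field_aut_zero)

lemma coeff_map_cst: "field_aut \<phi> \<Longrightarrow> coeff_map \<phi> (cst c) = cst (\<phi> c)"
  by (simp add: coeff_map_def fun_eq_iff cst_def field_aut_zero)

lemma fsupp_coeff_map: "field_aut \<phi> \<Longrightarrow> fsupp (coeff_map \<phi> p) = fsupp p"
  by (simp add: fsupp_def coeff_map_def field_aut_eq_0_iff)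

lemma coeff_map_in_fpolys_iff: "field_aut \<phi> \<Longrightarrow> coeff_map \<phi> p \<in> fpolys X \<longleftrightarrow> p \<in> fpolys X"
  by (simp add: fpolys_iff fsupp_coeff_map)

lemma coeff_map_inv_left: "field_aut \<phi> \<Longrightarrow> coeff_map (inv \<phi>) (coeff_map \<phi> p) = p"
  by (simp add: coeff_map_def fun_eq_iff field_aut_inv_left)

lemma coeff_map_inv_right: "field_aut \<phi> \<Longrightarrow> coeff_map \<phi> (coeff_map (inv \<phi>) p) = p"
  by (simp add: coeff_map_def fun_eq_iff field_aut_inv_right)

lemma bij_betw_coeff_map: "field_aut \<phi> \<Longrightarrow> bij_betw (coeff_map \<phi>) (fpolys X) (fpolys X)"
  by (rule bij_betw_byWitness[where f'="coeff_map (inv \<phi>)"])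
     (auto simp: coeff_map_inv_left coeff_map_inv_right coeff_map_in_fpolys_iff field_aut_inv)

lemma ev_coeff_map_inv:
  assumes f: "field_aut \<phi>"
  shows "ev (coeff_map (inv \<phi>) q) t = inv \<phi> (ev q (\<phi> t))"
proof -
  have fi: "field_aut (inv \<phi>)" by (rule field_aut_inv[OF f])
  show ?thesis
    by (simp add: ev_def field_aut_sum[OF fi] field_aut_mult[OF fi] field_aut_power[OF fi]
        fsupp_coeff_map[OF fi] field_aut_inv_left[OF f] coeff_map_apply)
qed

lemma alg_hom_conj_coeff_map:
  fixes g :: "('x, 'k::field) fpoly \<Rightarrow> ('x, 'k) fpoly"
  assumes f: "field_aut \<phi>" and h: "alg_hom X Y g"
  shows "alg_hom X Y (restr X (coeff_map (inv \<phi>) \<circ> g \<circ> coeff_map \<phi>))"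
proof -
  have fi: "field_aut (inv \<phi>)" by (rule field_aut_inv[OF f])
  have m: "coeff_map \<phi> p \<in> fpolys X" if "p \<in> fpolys X" for p
    using that coeff_map_in_fpolys_iff[OF f] by blast
  have m': "coeff_map (inv \<phi>) q \<in> fpolys Y" if "q \<in> fpolys Y" for q
    using that coeff_map_in_fpolys_iff[OF fi] by blast
  show ?thesis
    unfolding alg_hom_def using m m' alg_hom_in[OF h]
    by (simp add: fp_add_eq coeff_map_add[OF f] coeff_map_add[OF fi] alg_hom_add[OF h]
        coeff_map_mult[OF f] coeff_map_mult[OF fi] alg_hom_mult[OF h]
        coeff_map_smult[OF f] coeff_map_smult[OF fi] alg_hom_smult[OF h] field_aut_inv_left[OF f]
        coeff_map_one[OF f] coeff_map_one[OF fi] alg_hom_one[OF h])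
qed

lemma mirror_map_apply: "mirror_map p w = p (rev w)"
  by (simp add: mirror_map_def)

lemma mirror_map_mirror_map[simp]: "mirror_map (mirror_map p) = p"
  by (simp add: mirror_map_def fun_eq_iff)

lemma mirror_map_in_fpolys: "p \<in> fpolys X \<Longrightarrow> mirror_map p \<in> fpolys X"
proof -
  have "fsupp (mirror_map p) = rev ` fsupp p"
    by (auto simp: fsupp_def mirror_map_apply image_iff) (metis rev_rev_ident)
  then show "p \<in> fpolys X \<Longrightarrow> mirror_map p \<in> fpolys X" by (auto simp: fpolys_iff)
qed

lemma mirror_map_add: "mirror_map (p + q) = mirror_map p + mirror_map q"
  by (simp add: mirror_map_def fun_eq_iff plus_fun_apply)

lemma mirror_map_smult: "mirror_map (fp_smult c p) = fp_smult c (mirror_map p)"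
  by (simp add: mirror_map_def fun_eq_iff fp_smult_def)

lemma mirror_map_one: "mirror_map fp_one = fp_one"
  by (simp add: mirror_map_def fun_eq_iff fp_one_def)

lemma mirror_map_coeff_map: "mirror_map (coeff_map f p) = coeff_map f (mirror_map p)"
  by (simp add: mirror_map_def coeff_map_def fun_eq_iff)

lemma mirror_map_mult: "mirror_map (fp_mult p q) = fp_mult (mirror_map q) (mirror_map p)"
proof
  fix w
  have "mirror_map (fp_mult p q) w = (\<Sum>(u, v)\<in>splits (rev w). p u * q v)"
    by (simp add: mirror_map_apply fp_mult_splits)
  also have "\<dots> = (\<Sum>(u, v)\<in>splits w. q (rev u) * p (rev v))"
    by (rule sum.reindex_bij_witness[where i="\<lambda>(u, v). (rev v, rev u)" and j="\<lambda>(u, v). (rev v, rev u)"])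
       (auto simp: splits_def mult.commute, metis rev_append rev_rev_ident)
  also have "\<dots> = fp_mult (mirror_map q) (mirror_map p) w"
    by (simp add: fp_mult_splits mirror_map_apply case_prod_beta)
  finally show "mirror_map (fp_mult p q) w = fp_mult (mirror_map q) (mirror_map p) w" .
qed

section \<open>Automorphisms of the category of free algebras\<close>

lemma Mor_iff: "(X, Y, f) \<in> Mor \<longleftrightarrow> finite X \<and> finite Y \<and> alg_hom X Y f"
  by (simp add: Mor_def)

lemma Obj_iff: "X \<in> Obj \<longleftrightarrow> finite X"
  by (simp add: Obj_def)

lemma mcomp_simp: "mcomp (Y, Z, g) (X, Y', f) = (X, Z, restr X (g \<circ> f))"
  by (simp add: mcomp_def mdom_def mcod_def mfun_def)

lemma mon_single_noncomm:
  assumes "u \<noteq> v"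
  shows "(fp_mult (mon [u]) (mon [v]) :: ('x, 'k::field) fpoly) \<noteq> fp_mult (mon [v]) (mon [u])"
proof
  assume "(fp_mult (mon [u]) (mon [v]) :: ('x, 'k) fpoly) = fp_mult (mon [v]) (mon [u])"
  then have "(mon [u, v] :: ('x, 'k) fpoly) [u, v] = mon [v, u] [u, v]" by (simp add: fp_mult_mon)
  then show False using assms by (simp add: mon_def)
qed

lemma Obj_bij_finite: "bij_betw F Obj Obj \<Longrightarrow> finite X \<Longrightarrow> finite (F X)"
  by (auto simp: bij_betw_def Obj_iff)

lemma Obj_bij_inj: "bij_betw F Obj Obj \<Longrightarrow> finite X \<Longrightarrow> finite Y \<Longrightarrow> F X = F Y \<Longrightarrow> X = Y"
  by (auto simp: bij_betw_def inj_on_def Obj_iff)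

lemma Obj_bij_surj: "bij_betw F Obj Obj \<Longrightarrow> finite Y \<Longrightarrow> \<exists>X. finite X \<and> F X = Y"
  unfolding bij_betw_def by (metis Obj_iff imageE)

locale cat_automorphism =
  fixes FO :: "'x set \<Rightarrow> 'x set" and FM :: "('x, 'k::field) mor \<Rightarrow> ('x, 'k) mor"
  assumes cat_aut: "cat_aut FO FM"
begin

definition Fmap :: "'x set \<Rightarrow> 'x set \<Rightarrow> (('x, 'k) fpoly \<Rightarrow> ('x, 'k) fpoly) \<Rightarrow> ('x, 'k) fpoly \<Rightarrow> ('x, 'k) fpoly" where
  "Fmap X Y f = mfun (FM (X, Y, f))"

lemma FO_bij: "bij_betw FO Obj Obj" and FM_bij: "bij_betw FM Mor Mor"
  using cat_aut by (auto simp: cat_aut_def)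

lemmas finite_FO = Obj_bij_finite[OF FO_bij]
  and FO_inj = Obj_bij_inj[OF FO_bij]
  and FO_surj = Obj_bij_surj[OF FO_bij]

lemma FM_eq_Fmap:
  assumes "finite X" "finite Y" "alg_hom X Y f"
  shows "FM (X, Y, f) = (FO X, FO Y, Fmap X Y f)" and "alg_hom (FO X) (FO Y) (Fmap X Y f)"
proof -
  have m: "(X, Y, f) \<in> Mor" using assms by (simp add: Mor_iff)
  then have "FM (X, Y, f) \<in> Mor" using FM_bij by (auto simp: bij_betw_def)
  moreover have "mdom (FM (X, Y, f)) = FO X" "mcod (FM (X, Y, f)) = FO Y"
    using cat_aut m by (auto simp: cat_aut_def mdom_def mcod_def)
  ultimately show "FM (X, Y, f) = (FO X, FO Y, Fmap X Y f)" and "alg_hom (FO X) (FO Y) (Fmap X Y f)"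
    by (auto simp: Fmap_def mdom_def mcod_def mfun_def Mor_def prod_eq_iff)
qed

lemmas alg_hom_Fmap = FM_eq_Fmap(2)

lemma Fmap_inj:
  assumes "finite X" "finite Y" "alg_hom X Y f1" "alg_hom X Y f2" "Fmap X Y f1 = Fmap X Y f2"
  shows "f1 = f2"
proof -
  have "FM (X, Y, f1) = FM (X, Y, f2)" using FM_eq_Fmap(1) assms by simp
  moreover have "(X, Y, f1) \<in> Mor" "(X, Y, f2) \<in> Mor" using assms by (auto simp: Mor_iff)
  ultimately show ?thesis using FM_bij by (auto simp: bij_betw_def inj_on_def)
qed

lemma Fmap_surj:
  assumes X: "finite X" and Y: "finite Y" and g: "alg_hom (FO X) (FO Y) g"
  obtains f where "alg_hom X Y f" "Fmap X Y f = g"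
proof -
  have "(FO X, FO Y, g) \<in> FM ` Mor" using assms FM_bij by (simp add: Mor_iff finite_FO bij_betw_def)
  then obtain X' Y' f where m: "(X', Y', f) \<in> Mor" "FM (X', Y', f) = (FO X, FO Y, g)"
    by (auto simp del: Mor_iff)
  then have fin: "finite X'" "finite Y'" "alg_hom X' Y' f" by (auto simp: Mor_iff)
  then have "X' = X" "Y' = Y" using FO_inj X Y m(2) FM_eq_Fmap(1)[OF fin] by auto
  then show ?thesis using that m fin FM_eq_Fmap(1)[OF fin] by auto
qed

lemma Fmap_comp:
  assumes "finite X" "finite Y" "finite Z" "alg_hom X Y f" "alg_hom Y Z g"
  shows "Fmap X Z (restr X (g \<circ> f)) = restr (FO X) (Fmap Y Z g \<circ> Fmap X Y f)"
proof -
  have "(X, Y, f) \<in> Mor" "(Y, Z, g) \<in> Mor" using assms by (auto simp: Mor_iff)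
  moreover have "\<forall>f\<in>Mor. \<forall>g\<in>Mor. mcod f = mdom g \<longrightarrow> FM (mcomp g f) = mcomp (FM g) (FM f)"
    using cat_aut unfolding cat_aut_def by blast
  ultimately have "FM (mcomp (Y, Z, g) (X, Y, f)) = mcomp (FM (Y, Z, g)) (FM (X, Y, f))"
    by (simp add: mdom_def mcod_def del: Mor_iff)
  then have "Fmap X Z (restr X (g \<circ> f)) = mfun (mcomp (FM (Y, Z, g)) (FM (X, Y, f)))"
    by (simp add: Fmap_def mcomp_simp)
  also have "\<dots> = restr (FO X) (Fmap Y Z g \<circ> Fmap X Y f)"
    by (simp only: FM_eq_Fmap(1)[OF assms(1,2,4)] FM_eq_Fmap(1)[OF assms(2,3,5)] mcomp_simp)
       (simp add: mfun_def)
  finally show ?thesis .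
qed

lemma Fmap_id: "finite X \<Longrightarrow> Fmap X X (restr X id) = restr (FO X) id"
proof -
  assume "finite X"
  moreover have "\<forall>X\<in>Obj. FM (mid X) = mid (FO X)" using cat_aut unfolding cat_aut_def by blast
  ultimately show ?thesis by (simp add: Obj_iff mid_def Fmap_def mfun_def)
qed

lemma FO_empty: "FO {} = {}"
proof (rule ccontr)
  assume "FO {} \<noteq> {}"
  then obtain e where e: "e \<in> FO {}" by auto
  let ?E = "FO {}"
  obtain f1 where f1: "alg_hom {} {} f1" "Fmap {} {} f1 = restr ?E id"
    using Fmap_surj[OF finite.emptyI finite.emptyI alg_hom_id] .
  have "alg_hom ?E ?E (subst_hom (\<lambda>_. 0 :: ('x, 'k) fpoly) ?E)" by (rule alg_hom_subst_hom) simp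
  then obtain f2 where f2: "alg_hom {} {} f2" "Fmap {} {} f2 = subst_hom (\<lambda>_. 0 :: ('x, 'k) fpoly) ?E"
    by (rule Fmap_surj[OF finite.emptyI finite.emptyI])
  \<comment> \<open>there is only one homomorphism out of \<open>K\<close>\<close>
  have "f1 = f2" by (rule alg_hom_eqI[OF f1(1) f2(1)]) simp
  then have "(restr ?E id (mon [e]) :: ('x, 'k) fpoly) = subst_hom (\<lambda>_. 0) ?E (mon [e])"
    using f1 f2 by simp
  then have "(mon [e] :: ('x, 'k) fpoly) [e] = 0 [e]" using e by (simp add: subst_hom_mon1)
  then show False by (simp add: mon_def zero_fun_apply)
qed

lemma Fmap_comp_on_singleton:
  assumes X: "finite X" and Y: "finite Y" and b: "FO Y = {b}"
    and i: "alg_hom Y X i" and ib: "Fmap Y X i (mon [b]) = mon [b]"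
    and Z: "finite Z" and f: "alg_hom X Z f"
  shows "Fmap Y Z (restr Y (f \<circ> i)) = subst_hom (\<lambda>_. Fmap X Z f (mon [b])) {b}"
proof (rule alg_hom_eqI)
  show "alg_hom {b} (FO Z) (Fmap Y Z (restr Y (f \<circ> i)))"
    using alg_hom_Fmap[OF Y Z alg_hom_comp[OF i f]] b by simp
  have "(mon [b] :: ('x, 'k) fpoly) \<in> fpolys (FO X)" using alg_hom_in[OF alg_hom_Fmap[OF Y X i], of "mon [b]"] ib b by simp
  then show "alg_hom {b} (FO Z) (subst_hom (\<lambda>_. Fmap X Z f (mon [b])) {b})"
    by (intro alg_hom_subst_hom alg_hom_in[OF alg_hom_Fmap[OF X Z f]])
qed (simp add: Fmap_comp[OF Y X Z i f] b ib subst_hom_mon1)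

lemma generator_witness:
  assumes X: "finite X" and b: "b \<in> FO X"
  obtains Y a where "finite Y" "FO Y = {b}" "a \<in> fpolys X"
    "\<And>Z f w. finite Z \<Longrightarrow> w \<in> Z \<Longrightarrow> alg_hom X Z f \<Longrightarrow>
       Fmap X Z f (mon [b]) = Fmap Y Z (subst_hom (\<lambda>_. mon [w]) Y) (mon [b]) \<Longrightarrow> f a = mon [w]"
proof -
  obtain Y where Y: "finite Y" "FO Y = {b}" using FO_surj[of "{b}"] by auto
  then obtain y where y: "y \<in> Y" using FO_empty by fastforce
  have "alg_hom (FO Y) (FO X) (subst_hom (\<lambda>b. mon [b] :: ('x, 'k) fpoly) {b})"
    unfolding Y(2) by (rule alg_hom_subst_hom) (use b in simp)
  then obtain i where i: "alg_hom Y X i" "Fmap Y X i = subst_hom (\<lambda>b. mon [b]) {b}"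
    using Fmap_surj[OF Y(1) X] by blast
  show thesis
  proof (rule that[OF Y, of "i (mon [y])"])
    show "i (mon [y]) \<in> fpolys X" using y by (intro alg_hom_in[OF i(1)]) simp
    fix Z f w
    assume Z: "finite Z" and w: "w \<in> Z" and f: "alg_hom X Z f"
      and fb: "Fmap X Z f (mon [b]) = Fmap Y Z (subst_hom (\<lambda>_. mon [w]) Y) (mon [b])"
    have h: "alg_hom Y Z (subst_hom (\<lambda>_. mon [w]) Y)" using w by (intro alg_hom_subst_hom) simp
    have "Fmap Y Z (restr Y (f \<circ> i)) = subst_hom (\<lambda>_. Fmap X Z f (mon [b])) {b}"
      using Fmap_comp_on_singleton[OF X Y i(1) _ Z f] i(2) by (simp add: subst_hom_mon1)
    also have "\<dots> = Fmap Y Z (subst_hom (\<lambda>_. mon [w]) Y)"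
      using alg_hom_Fmap[OF Y(1) Z h] Y(2) fb
      by (intro alg_hom_eqI[of "{b}" "FO Z"] alg_hom_subst_hom) (auto simp: subst_hom_mon1 alg_hom_in)
    finally have "restr Y (f \<circ> i) = subst_hom (\<lambda>_. mon [w]) Y"
      by (rule Fmap_inj[OF Y(1) Z alg_hom_comp[OF i(1) f] h])
    then have "restr Y (f \<circ> i) (mon [y]) = subst_hom (\<lambda>_. mon [w]) Y (mon [y])" by simp
    then show "f (i (mon [y])) = mon [w]" using y by (simp add: subst_hom_mon1)
  qed
qed

text \<open>
If \<open>FO {x}\<close> contained two generators, a single homomorphism out of \<open>K\<langle>x\<rangle>\<close> would map two
elements of the commutative algebra \<open>K\<langle>x\<rangle>\<close> to the non-commuting generators \<open>u, v\<close>.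
\<close>

lemma FO_singleton:
  assumes inf: "infinite (UNIV :: 'x set)"
  shows "\<exists>y. FO {x} = {y}"
proof (rule ccontr)
  assume nsg: "\<nexists>y. FO {x} = {y}"
  let ?B = "FO {x}"
  have fx: "finite {x}" by simp
  have "?B \<noteq> {}" using FO_empty FO_inj[of "{x}" "{}"] by auto
  then obtain b1 b2 where b: "b1 \<in> ?B" "b2 \<in> ?B" "b1 \<noteq> b2" using nsg by blast
  obtain Y1 a1 where Y1: "finite Y1" "FO Y1 = {b1}" "a1 \<in> fpolys {x}"
    and a1: "\<And>Z f w. finite Z \<Longrightarrow> w \<in> Z \<Longrightarrow> alg_hom {x} Z f \<Longrightarrow>
       Fmap {x} Z f (mon [b1]) = Fmap Y1 Z (subst_hom (\<lambda>_. mon [w]) Y1) (mon [b1]) \<Longrightarrow> f a1 = mon [w]"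
    using generator_witness[OF fx b(1)] by blast
  obtain Y2 a2 where Y2: "finite Y2" "FO Y2 = {b2}" "a2 \<in> fpolys {x}"
    and a2: "\<And>Z f w. finite Z \<Longrightarrow> w \<in> Z \<Longrightarrow> alg_hom {x} Z f \<Longrightarrow>
       Fmap {x} Z f (mon [b2]) = Fmap Y2 Z (subst_hom (\<lambda>_. mon [w]) Y2) (mon [b2]) \<Longrightarrow> f a2 = mon [w]"
    using generator_witness[OF fx b(2)] by blast
  obtain u :: 'x where True by simp
  obtain v where "v \<notin> {u}" using ex_new_if_finite[OF inf, of "{u}"] by auto
  then have uv: "u \<noteq> v" by auto
  let ?Z = "{u, v}"
  define g1 where "g1 = Fmap Y1 ?Z (subst_hom (\<lambda>_. mon [u]) Y1) (mon [b1])"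
  define g2 where "g2 = Fmap Y2 ?Z (subst_hom (\<lambda>_. mon [v]) Y2) (mon [b2])"
  have h1: "alg_hom Y1 ?Z (subst_hom (\<lambda>_. mon [u]) Y1)" and h2: "alg_hom Y2 ?Z (subst_hom (\<lambda>_. mon [v]) Y2)"
    by (simp_all add: alg_hom_subst_hom)
  have "g1 \<in> fpolys (FO ?Z)" "g2 \<in> fpolys (FO ?Z)" unfolding g1_def g2_def
    by (rule alg_hom_in[OF alg_hom_Fmap[OF Y1(1) _ h1]] alg_hom_in[OF alg_hom_Fmap[OF Y2(1) _ h2]],
        simp_all add: Y1(2) Y2(2))+
  then have "alg_hom ?B (FO ?Z) (subst_hom (\<lambda>b. if b = b1 then g1 else g2) ?B)"
    by (intro alg_hom_subst_hom) simp
  then obtain f where f: "alg_hom {x} ?Z f" "Fmap {x} ?Z f = subst_hom (\<lambda>b. if b = b1 then g1 else g2) ?B"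
    by (rule Fmap_surj[OF fx finite.insertI[OF finite.insertI[OF finite.emptyI]]])
  have "Fmap {x} ?Z f (mon [b1]) = g1" "Fmap {x} ?Z f (mon [b2]) = g2"
    using f(2) b by (simp_all add: subst_hom_mon1)
  then have "f a1 = mon [u]" "f a2 = mon [v]"
    by (auto intro: a1[OF _ _ f(1)] a2[OF _ _ f(1)] simp: g1_def g2_def)
  moreover have "fp_mult (f a1) (f a2) = fp_mult (f a2) (f a1)"
    using Y1(3) Y2(3) by (simp add: alg_hom_mult[OF f(1), symmetric] fp_mult_commute_single)
  ultimately show False using mon_single_noncomm[OF uv, where 'k='k] by simp
qed

end

section \<open>The induced bijections on elements\<close>

locale pointed_cat_automorphism = cat_automorphism FO FM
  for FO :: "'x set \<Rightarrow> 'x set" and FM :: "('x, 'k::field) mor \<Rightarrow> ('x, 'k) mor" +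
  fixes x0 y0 :: 'x
  assumes FO_x0: "FO {x0} = {y0}"
begin

definition pt_hom :: "('x, 'k) fpoly \<Rightarrow> ('x, 'k) fpoly \<Rightarrow> ('x, 'k) fpoly" where
  "pt_hom a = subst_hom (\<lambda>_. a) {x0}"

definition Fel :: "'x set \<Rightarrow> ('x, 'k) fpoly \<Rightarrow> ('x, 'k) fpoly" where
  "Fel X a = Fmap {x0} X (pt_hom a) (mon [y0])"

definition kappa :: "'k \<Rightarrow> 'k" where
  "kappa c = Fel {} (cst c) []"

lemma alg_hom_pt_hom: "a \<in> fpolys X \<Longrightarrow> alg_hom {x0} X (pt_hom a)"
  unfolding pt_hom_def by (rule alg_hom_subst_hom)

lemma pt_hom_x0: "pt_hom a (mon [x0]) = a"
  by (simp add: pt_hom_def subst_hom_mon1)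

lemma alg_hom_Fmap_pt_hom: "finite X \<Longrightarrow> a \<in> fpolys X \<Longrightarrow> alg_hom {y0} (FO X) (Fmap {x0} X (pt_hom a))"
  using alg_hom_Fmap[of "{x0}" X "pt_hom a"] alg_hom_pt_hom FO_x0 by simp

lemma Fel_in: "finite X \<Longrightarrow> a \<in> fpolys X \<Longrightarrow> Fel X a \<in> fpolys (FO X)"
  unfolding Fel_def by (rule alg_hom_in[OF alg_hom_Fmap_pt_hom]) auto

lemma Fel_inj:
  assumes X: "finite X" and a: "a \<in> fpolys X" and a': "a' \<in> fpolys X" and e: "Fel X a = Fel X a'"
  shows "a = a'"
proof -
  have "Fmap {x0} X (pt_hom a) = Fmap {x0} X (pt_hom a')"
    by (rule alg_hom_eqI[OF alg_hom_Fmap_pt_hom[OF X a] alg_hom_Fmap_pt_hom[OF X a']])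
       (use e in \<open>simp add: Fel_def\<close>)
  then have "pt_hom a = pt_hom a'" using Fmap_inj[OF _ X alg_hom_pt_hom[OF a] alg_hom_pt_hom[OF a']] by simp
  then show ?thesis by (metis pt_hom_x0)
qed

lemma Fel_surj:
  assumes X: "finite X" and b: "b \<in> fpolys (FO X)"
  shows "\<exists>a\<in>fpolys X. Fel X a = b"
proof -
  have g: "alg_hom (FO {x0}) (FO X) (subst_hom (\<lambda>_. b) {y0})"
    unfolding FO_x0 by (rule alg_hom_subst_hom) (use b in auto)
  obtain f where f: "alg_hom {x0} X f" "Fmap {x0} X f = subst_hom (\<lambda>_. b) {y0}"
    by (rule Fmap_surj[OF _ X g]) simp
  have am: "f (mon [x0]) \<in> fpolys X" by (rule alg_hom_in[OF f(1)]) simp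
  have "f = pt_hom (f (mon [x0]))"
    by (rule alg_hom_eqI[OF f(1) alg_hom_pt_hom[OF am]]) (simp add: pt_hom_x0)
  then have "Fel X (f (mon [x0])) = b" using f(2) by (simp add: Fel_def subst_hom_mon1)
  then show ?thesis using am by blast
qed

lemma bij_betw_Fel: "finite X \<Longrightarrow> bij_betw (Fel X) (fpolys X) (fpolys (FO X))"
  by (rule bij_betw_imageI) (auto intro: inj_onI Fel_inj Fel_in dest: Fel_surj)

lemma Fel_natural:
  assumes X: "finite X" and Y: "finite Y" and nu: "alg_hom X Y \<nu>" and a: "a \<in> fpolys X"
  shows "Fel Y (\<nu> a) = Fmap X Y \<nu> (Fel X a)"
proof -
  have na: "\<nu> a \<in> fpolys Y" by (rule alg_hom_in[OF nu a])
  have "restr {x0} (\<nu> \<circ> pt_hom a) = pt_hom (\<nu> a)"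
    by (rule alg_hom_eqI[OF alg_hom_comp[OF alg_hom_pt_hom[OF a] nu] alg_hom_pt_hom[OF na]])
       (simp add: pt_hom_x0)
  then have "Fmap {x0} Y (pt_hom (\<nu> a)) = restr (FO {x0}) (Fmap X Y \<nu> \<circ> Fmap {x0} X (pt_hom a))"
    using Fmap_comp[OF _ X Y alg_hom_pt_hom[OF a] nu] by simp
  then show ?thesis by (simp add: Fel_def FO_x0)
qed

lemma Fel_x0: "Fel {x0} (mon [x0]) = mon [y0]"
proof -
  have "pt_hom (mon [x0]) = restr {x0} id"
    by (rule alg_hom_eqI[OF alg_hom_pt_hom alg_hom_id]) (auto simp: pt_hom_x0)
  then show ?thesis using Fmap_id[of "{x0}"] by (simp add: Fel_def FO_x0)
qed

lemma Fel_empty_cst: "Fel {} (cst c) = cst (kappa c)"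
proof -
  have "Fel {} (cst c) \<in> fpolys {}" using Fel_in[of "{}" "cst c"] FO_empty by simp
  then show ?thesis by (simp add: kappa_def fpolys_empty[symmetric])
qed

lemma Fel_cst:
  assumes X: "finite X"
  shows "Fel X (cst c) = cst (kappa c)"
proof -
  let ?i = "subst_hom (\<lambda>_. 0) {} :: ('x, 'k) fpoly \<Rightarrow> _"
  have i: "alg_hom {} X ?i" by (rule alg_hom_subst_hom) simp
  have "Fel X (?i (cst c)) = Fmap {} X ?i (Fel {} (cst c))"
    by (rule Fel_natural[OF _ X i]) simp_all
  then show ?thesis
    using alg_hom_cst[OF i] alg_hom_cst[OF alg_hom_Fmap[OF _ X i]] by (simp add: Fel_empty_cst)
qed

lemma bij_kappa: "bij kappa"
proof (rule bijI)
  show "inj kappa"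
    by (rule injI) (metis Fel_empty_cst Fel_inj cst_inj finite.emptyI fpolys_cst)
  have "d \<in> range kappa" for d
  proof -
    obtain a where a: "a \<in> fpolys {}" "Fel {} a = cst d" using Fel_surj[of "{}" "cst d"] by auto
    then have "cst (kappa (a [])) = (cst d :: ('x, 'k) fpoly)" using Fel_empty_cst fpolys_empty by metis
    then show ?thesis by (metis cst_inj rangeI)
  qed
  then show "surj kappa" by blast
qed

lemma subst_hom_cst_eq_ev: "p \<in> fpolys X \<Longrightarrow> subst_hom (\<lambda>_. cst a) X p = cst (ev p a)"
  by (simp add: subst_hom_def subst_cst_eq_ev)

lemma kappa_ev:
  assumes p: "p \<in> fpolys {x0}"
  shows "kappa (ev p a) = ev (Fel {x0} p) (kappa a)"
proof -
  let ?e = "subst_hom (\<lambda>_. cst a) {x0} :: ('x, 'k) fpoly \<Rightarrow> _"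
  have e: "alg_hom {x0} {} ?e" by (rule alg_hom_subst_hom) simp
  have "Fmap {x0} {} ?e (mon [y0]) = Fel {} (?e (mon [x0]))"
    using Fel_natural[OF _ _ e, of "mon [x0]"] Fel_x0 by simp
  then have "Fmap {x0} {} ?e (mon [y0]) = cst (kappa a)"
    by (simp add: subst_hom_mon1 Fel_empty_cst)
  then have G: "Fmap {x0} {} ?e = subst_hom (\<lambda>_. cst (kappa a)) {y0}"
    using alg_hom_Fmap[OF _ _ e] FO_x0 FO_empty
    by (intro alg_hom_eqI[of "{y0}" "{}"] alg_hom_subst_hom) (auto simp: subst_hom_mon1)
  have "cst (kappa (ev p a)) = Fel {} (?e p)" using p by (simp add: subst_hom_cst_eq_ev Fel_empty_cst)
  also have "\<dots> = Fmap {x0} {} ?e (Fel {x0} p)" by (rule Fel_natural[OF _ _ e p]) auto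
  also have "\<dots> = cst (ev (Fel {x0} p) (kappa a))"
    unfolding G by (rule subst_hom_cst_eq_ev) (use Fel_in[OF _ p] FO_x0 in simp)
  finally show ?thesis by (rule cst_inj)
qed

lemma kappa_conj_ev_affine:
  assumes inf: "infinite (UNIV :: 'k set)"
    and p: "p \<in> fpolys {x0}" and p': "p' \<in> fpolys {x0}" and e: "\<And>a. ev p (ev p' a) = a"
  shows "\<exists>\<alpha> \<beta>. \<forall>a. kappa (ev p a) = \<alpha> * kappa a + \<beta>"
proof -
  have Fp: "Fel {x0} p \<in> fpolys {y0}" using Fel_in[OF _ p] FO_x0 by auto
  have "ev (Fel {x0} p) (ev (Fel {x0} p') (kappa a)) = kappa a" for a
    using kappa_ev[OF p] kappa_ev[OF p'] e by metis
  then have "ev (Fel {x0} p) (ev (Fel {x0} p') t) = t" for t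
    using bij_kappa by (metis bij_pointE)
  then obtain \<alpha> \<beta> where "\<forall>t. ev (Fel {x0} p) t = \<alpha> * t + \<beta>"
    using ev_affine_if_left_inverse[OF inf Fp] by blast
  then show ?thesis using kappa_ev[OF p] by auto
qed

lemma kappa_semiaffine:
  assumes inf: "infinite (UNIV :: 'k set)"
  shows "\<exists>\<phi> k1 k0. field_aut \<phi> \<and> k1 \<noteq> 0 \<and> (\<forall>a. kappa a = k1 * \<phi> a + k0)"
proof (rule semiaffine_bij_decomp[OF bij_kappa])
  fix c :: 'k
  have "ev (mon [x0] + cst c :: ('x, 'k) fpoly) a = a + c" for a
    by (simp add: ev_add fpolys_finite[OF fpolys_cst])
  moreover have "ev (mon [x0] + cst (- c) :: ('x, 'k) fpoly) a = a - c" for a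
    by (simp add: ev_add fpolys_finite[OF fpolys_cst])
  ultimately show "\<exists>\<alpha> \<beta>. \<forall>a. kappa (a + c) = \<alpha> * kappa a + \<beta>"
    using kappa_conj_ev_affine[OF inf, of "mon [x0] + cst c" "mon [x0] + cst (- c)"] by simp
next
  fix l :: 'k assume l: "l \<noteq> 0"
  have "ev (fp_smult l (mon [x0]) :: ('x, 'k) fpoly) a = l * a" for l a by (simp add: ev_smult)
  then show "\<exists>\<gamma> \<delta>. \<forall>a. kappa (l * a) = \<gamma> * kappa a + \<delta>"
    using kappa_conj_ev_affine[OF inf, of "fp_smult l (mon [x0])" "fp_smult (inverse l) (mon [x0])"] l
    by simp
qed

end

section \<open>Natural bijections fixing constants are (anti-)multiplicative\<close>

definition subst2 :: "'x \<Rightarrow> 'x \<Rightarrow> ('x, 'k::field) fpoly \<Rightarrow> ('x, 'k) fpoly \<Rightarrow> ('x, 'k) fpoly \<Rightarrow> ('x, 'k) fpoly" where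
  "subst2 x y a b = subst_hom (\<lambda>v. if v = x then a else b) {x, y}"

lemma alg_hom_subst2: "a \<in> fpolys X \<Longrightarrow> b \<in> fpolys X \<Longrightarrow> alg_hom {x, y} X (subst2 x y a b)"
  unfolding subst2_def by (rule alg_hom_subst_hom) auto

lemma subst2_in: "a \<in> fpolys X \<Longrightarrow> b \<in> fpolys X \<Longrightarrow> P \<in> fpolys {x, y} \<Longrightarrow> subst2 x y a b P \<in> fpolys X"
  by (rule alg_hom_in[OF alg_hom_subst2])

lemma subst2_x: "subst2 x y a b (mon [x]) = a"
  by (simp add: subst2_def subst_hom_mon1)

lemma subst2_y: "x \<noteq> y \<Longrightarrow> subst2 x y a b (mon [y]) = b"
  by (simp add: subst2_def subst_hom_mon1)

lemma subst2_two_terms: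
  assumes "set w1 \<subseteq> {x, y}" "set w2 \<subseteq> {x, y}"
  shows "subst2 x y a b (fp_smult \<alpha> (mon w1) + fp_smult \<beta> (mon w2))
    = fp_smult \<alpha> (subst_word (\<lambda>v. if v = x then a else b) w1) + fp_smult \<beta> (subst_word (\<lambda>v. if v = x then a else b) w2)"
proof -
  have "fp_smult \<alpha> (mon w1) + fp_smult \<beta> (mon w2) \<in> fpolys {x, y}" using assms by simp
  then show ?thesis by (simp add: subst2_def subst_hom_def subst_add subst_smult subst_mon)
qed

lemma prod_list_two_letters:
  fixes l l' :: "'a::comm_monoid_mult"
  assumes "set w \<subseteq> {x, y}" "x \<noteq> y"
  shows "prod_list (map (\<lambda>v. if v = x then l else l') w) = l ^ count_list w x * l' ^ count_list w y"
  using assms by (induction w) (auto simp: mult_ac)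

lemma subst2_scaled_apply:
  assumes xy: "x \<noteq> y" and P: "P \<in> fpolys {x, y}"
  shows "subst2 x y (fp_smult l (mon [x])) (fp_smult l' (mon [y])) P w
    = l ^ count_list w x * l' ^ count_list w y * P w"
proof -
  have "subst2 x y (fp_smult l (mon [x])) (fp_smult l' (mon [y]))
      = subst_hom (\<lambda>v. fp_smult (if v = x then l else l') (mon [v])) {x, y}"
    unfolding subst2_def by (rule subst_hom_cong) auto
  moreover have "prod_list (map (\<lambda>v. if v = x then l else l') w) * P w = l ^ count_list w x * l' ^ count_list w y * P w"
  proof (cases "P w = 0")
    case False
    then show ?thesis using prod_list_two_letters[OF fpolys_set[OF P False] xy] by simp
  qed simp
  ultimately show ?thesis by (simp add: subst_hom_diag_apply[OF P])
qed

lemma fpoly_two_terms: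
  assumes "\<And>w. P w \<noteq> 0 \<Longrightarrow> w = w1 \<or> w = w2" "w1 \<noteq> w2"
  shows "P = fp_smult (P w1) (mon w1) + fp_smult (P w2) (mon w2)"
proof
  fix w
  show "P w = (fp_smult (P w1) (mon w1) + fp_smult (P w2) (mon w2)) w"
    using assms(1)[of w] assms(2) by (cases "P w = 0") (auto simp: plus_fun_apply fp_smult_def mon_def)
qed

lemma length_two_letters: "set w \<subseteq> {x, y} \<Longrightarrow> x \<noteq> y \<Longrightarrow> length w = count_list w x + count_list w y"
  by (induction w) auto

locale natural_transfer =
  fixes G :: "'x set \<Rightarrow> 'x set" and u :: "'x set \<Rightarrow> ('x, 'k::field) fpoly \<Rightarrow> ('x, 'k) fpoly"
    and st :: "'x set \<Rightarrow> 'x set \<Rightarrow> (('x, 'k) fpoly \<Rightarrow> ('x, 'k) fpoly) \<Rightarrow> ('x, 'k) fpoly \<Rightarrow> ('x, 'k) fpoly"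
    and z0 :: 'x
  assumes u_bij: "finite X \<Longrightarrow> bij_betw (u X) (fpolys X) (fpolys (G X))"
    and st_hom: "finite X \<Longrightarrow> finite Y \<Longrightarrow> alg_hom X Y \<nu> \<Longrightarrow> alg_hom (G X) (G Y) (st X Y \<nu>)"
    and natural: "finite X \<Longrightarrow> finite Y \<Longrightarrow> alg_hom X Y \<nu> \<Longrightarrow> a \<in> fpolys X \<Longrightarrow> u Y (\<nu> a) = st X Y \<nu> (u X a)"
    and u_cst: "finite X \<Longrightarrow> u X (cst c) = cst c"
    and u_scal: "u {z0} (fp_smult l (mon [z0])) = fp_smult l (u {z0} (mon [z0]))"
    and infinite_field: "infinite (UNIV :: 'k set)"
begin

lemma u_in: "finite X \<Longrightarrow> a \<in> fpolys X \<Longrightarrow> u X a \<in> fpolys (G X)"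
  using u_bij by (auto simp: bij_betw_def)

lemma u_inj: "finite X \<Longrightarrow> a \<in> fpolys X \<Longrightarrow> b \<in> fpolys X \<Longrightarrow> u X a = u X b \<Longrightarrow> a = b"
  using u_bij by (auto simp: bij_betw_def inj_on_def)

lemma u_smult:
  assumes X: "finite X" and a: "a \<in> fpolys X"
  shows "u X (fp_smult l a) = fp_smult l (u X a)"
proof -
  let ?m = "subst_hom (\<lambda>_. a) {z0}"
  have m: "alg_hom {z0} X ?m" by (rule alg_hom_subst_hom) (use a in simp)
  have m0: "?m (mon [z0]) = a" by (simp add: subst_hom_mon1)
  have mz: "u {z0} (mon [z0]) \<in> fpolys (G {z0})" by (rule u_in) simp_all
  have "u X (fp_smult l a) = u X (?m (fp_smult l (mon [z0])))"
    using alg_hom_smult[OF m, of "mon [z0]" l] m0 by simp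
  also have "\<dots> = st {z0} X ?m (u {z0} (fp_smult l (mon [z0])))"
    by (rule natural[OF _ X m]) simp_all
  also have "\<dots> = fp_smult l (st {z0} X ?m (u {z0} (mon [z0])))"
    by (simp add: u_scal alg_hom_smult[OF st_hom[OF _ X m] mz])
  also have "\<dots> = fp_smult l (u X a)"
    using natural[OF _ X m, of "mon [z0]"] m0 by simp
  finally show ?thesis .
qed

lemma op_representative:
  fixes op :: "('x, 'k) fpoly \<Rightarrow> ('x, 'k) fpoly \<Rightarrow> ('x, 'k) fpoly"
  assumes xy: "x \<noteq> y"
    and op_in: "\<And>X a b. a \<in> fpolys X \<Longrightarrow> b \<in> fpolys X \<Longrightarrow> op a b \<in> fpolys X"
    and op_hom: "\<And>X Y f a b. alg_hom X Y f \<Longrightarrow> a \<in> fpolys X \<Longrightarrow> b \<in> fpolys X \<Longrightarrow> f (op a b) = op (f a) (f b)"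
  shows "\<exists>R\<in>fpolys {x, y}. \<forall>Y c d. finite Y \<longrightarrow> c \<in> fpolys Y \<longrightarrow> d \<in> fpolys Y \<longrightarrow>
    u Y (subst2 x y c d R) = op (u Y c) (u Y d)"
proof -
  let ?X = "{x, y}"
  have mx: "mon [x] \<in> fpolys ?X" and my: "mon [y] \<in> fpolys ?X" by simp_all
  have ux: "u ?X (mon [x]) \<in> fpolys (G ?X)" and uy: "u ?X (mon [y]) \<in> fpolys (G ?X)"
    by (simp_all add: u_in)
  have b: "bij_betw (u ?X) (fpolys ?X) (fpolys (G ?X))" by (rule u_bij) simp
  define R where "R = inv_into (fpolys ?X) (u ?X) (op (u ?X (mon [x])) (u ?X (mon [y])))"
  have R: "R \<in> fpolys ?X"
    unfolding R_def using bij_betwE[OF bij_betw_inv_into[OF b]] op_in[OF ux uy] by blast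
  have uR: "u ?X R = op (u ?X (mon [x])) (u ?X (mon [y]))"
    unfolding R_def by (rule bij_betw_inv_into_right[OF b op_in[OF ux uy]])
  show ?thesis
  proof (intro bexI[OF _ R] allI impI)
    fix Y and c d :: "('x, 'k) fpoly" assume Y: "finite Y" and c: "c \<in> fpolys Y" and d: "d \<in> fpolys Y"
    note h = alg_hom_subst2[OF c d, of x y]
    have "u Y (subst2 x y c d R) = st ?X Y (subst2 x y c d) (u ?X R)" by (rule natural[OF _ Y h R]) simp
    also have "\<dots> = op (st ?X Y (subst2 x y c d) (u ?X (mon [x]))) (st ?X Y (subst2 x y c d) (u ?X (mon [y])))"
      unfolding uR by (rule op_hom[OF st_hom[OF _ Y h] ux uy]) simp
    also have "\<dots> = op (u Y c) (u Y d)"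
      using natural[OF _ Y h mx] natural[OF _ Y h my] by (simp add: subst2_x subst2_y[OF xy])
    finally show "u Y (subst2 x y c d R) = op (u Y c) (u Y d)" .
  qed
qed

lemma representative_degrees:
  fixes op :: "('x, 'k) fpoly \<Rightarrow> ('x, 'k) fpoly \<Rightarrow> ('x, 'k) fpoly" and s t :: "'k \<Rightarrow> 'k"
  assumes xy: "x \<noteq> y" and R: "R \<in> fpolys {x, y}"
    and rep: "\<And>Y c d. finite Y \<Longrightarrow> c \<in> fpolys Y \<Longrightarrow> d \<in> fpolys Y \<Longrightarrow> u Y (subst2 x y c d R) = op (u Y c) (u Y d)"
    and scale: "\<And>a b. op (fp_smult (s l) a) (fp_smult (t l) b) = fp_smult l (op a b)"
    and w: "R w \<noteq> 0"
  shows "s l ^ count_list w x * t l ^ count_list w y = l"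
proof -
  let ?X = "{x, y}"
  have mx: "mon [x] \<in> fpolys ?X" and my: "mon [y] \<in> fpolys ?X" by simp_all
  have "subst2 x y (mon [x]) (mon [y]) R = R"
    using subst2_scaled_apply[OF xy R, of 1 1] by (simp add: fun_eq_iff)
  then have uR: "u ?X R = op (u ?X (mon [x])) (u ?X (mon [y]))" using rep[OF _ mx my] by simp
  have "u ?X (subst2 x y (fp_smult (s l) (mon [x])) (fp_smult (t l) (mon [y])) R) = u ?X (fp_smult l R)"
    using rep[of ?X "fp_smult (s l) (mon [x])" "fp_smult (t l) (mon [y])"] u_smult[of ?X R l] R
    by (simp add: u_smult uR scale)
  then have "subst2 x y (fp_smult (s l) (mon [x])) (fp_smult (t l) (mon [y])) R = fp_smult l R"
    by (rule u_inj[rotated -1]) (simp_all add: R subst2_in)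
  then have "s l ^ count_list w x * t l ^ count_list w y * R w = l * R w"
    by (metis fp_smult_apply subst2_scaled_apply[OF xy R])
  then show ?thesis using w by simp
qed

lemma u_add:
  fixes x y :: 'x
  assumes xy: "x \<noteq> y" and X: "finite X" and a: "a \<in> fpolys X" and b: "b \<in> fpolys X"
  shows "u X (a + b) = u X a + u X b"
proof -
  let ?X = "{x, y}"
  have "\<exists>R\<in>fpolys ?X. \<forall>Y c d. finite Y \<longrightarrow> c \<in> fpolys Y \<longrightarrow> d \<in> fpolys Y \<longrightarrow>
      u Y (subst2 x y c d R) = u Y c + u Y d"
    by (rule op_representative[where op="(+)", OF xy]) (simp, rule alg_hom_add)
  then obtain R where R: "R \<in> fpolys ?X" and rep: "\<forall>Y c d. finite Y \<longrightarrow> c \<in> fpolys Y \<longrightarrow> d \<in> fpolys Y \<longrightarrow>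
      u Y (subst2 x y c d R) = u Y c + u Y d" ..
  note rep = rep[rule_format]
  have supp: "w = [x] \<or> w = [y]" if w: "R w \<noteq> 0" for w
  proof -
    have "l ^ (count_list w x + count_list w y) = l" for l :: 'k
      using representative_degrees[where op="(+)" and s=id and t=id and l=l, OF xy R rep _ w] by (simp add: fp_smult_add power_add)
    then have "count_list w x + count_list w y = 1" by (rule power_eq_self_imp_eq_1[OF infinite_field])
    then have "length w = 1" using length_two_letters[OF fpolys_set[OF R w] xy] by simp
    then show ?thesis using fpolys_set[OF R w] by (cases w) auto
  qed
  define \<alpha> \<beta> where "\<alpha> = R [x]" and "\<beta> = R [y]"
  have "R = fp_smult \<alpha> (mon [x]) + fp_smult \<beta> (mon [y])"
    unfolding \<alpha>_def \<beta>_def using xy supp by (intro fpoly_two_terms) auto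
  then have sR: "subst2 x y c d R = fp_smult \<alpha> c + fp_smult \<beta> d" for c d
    using xy by (simp add: subst2_two_terms)
  have "u ?X (subst2 x y (mon [x]) 0 R) = u ?X (mon [x])"
    using rep[of ?X "mon [x]" 0] u_cst[of ?X 0] by simp
  then have Rx: "subst2 x y (mon [x]) 0 R = mon [x]" by (rule u_inj[rotated -1]) (simp_all add: R subst2_in)
  have "u ?X (subst2 x y 0 (mon [y]) R) = u ?X (mon [y])"
    using rep[of ?X 0 "mon [y]"] u_cst[of ?X 0] by simp
  then have Ry: "subst2 x y 0 (mon [y]) R = mon [y]" by (rule u_inj[rotated -1]) (simp_all add: R subst2_in)
  from Rx Ry
  have "fp_smult \<alpha> (mon [x]) [x] = mon [x] [x]" "fp_smult \<beta> (mon [y]) [y] = mon [y] [y]"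
    by (simp_all add: sR)
  then have "\<alpha> = 1" "\<beta> = 1" by (simp_all add: fp_smult_apply mon_def)
  then show ?thesis using rep[OF X a b] sR by simp
qed

lemma mult_representative_two_terms:
  fixes x y :: 'x
  assumes xy: "x \<noteq> y" and S: "S \<in> fpolys {x, y}"
    and rep: "\<And>Y c d. finite Y \<Longrightarrow> c \<in> fpolys Y \<Longrightarrow> d \<in> fpolys Y \<Longrightarrow>
      u Y (subst2 x y c d S) = fp_mult (u Y c) (u Y d)"
  shows "S = fp_smult (S [x, y]) (mon [x, y]) + fp_smult (S [y, x]) (mon [y, x])"
proof (rule fpoly_two_terms)
  fix w assume w: "S w \<noteq> 0"
  have "count_list w x = 1"
    using representative_degrees[where op=fp_mult and s=id and t="\<lambda>_. 1", OF xy S rep _ w]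
    by (intro power_eq_self_imp_eq_1[OF infinite_field]) (simp add: fp_mult_smult_left fp_mult_smult_right)
  moreover have "count_list w y = 1"
    using representative_degrees[where op=fp_mult and s="\<lambda>_. 1" and t=id, OF xy S rep _ w]
    by (intro power_eq_self_imp_eq_1[OF infinite_field]) (simp add: fp_mult_smult_left fp_mult_smult_right)
  moreover have "length w = count_list w x + count_list w y"
    by (rule length_two_letters[OF fpolys_set[OF S w] xy])
  ultimately show "w = [x, y] \<or> w = [y, x]" using fpolys_set[OF S w]
    by (auto simp: length_Suc_conv numeral_2_eq_2 split: if_splits)
qed (use xy in simp)

text \<open>
Writing \<open>S = \<alpha> x y + \<beta> y x\<close>, the unit gives \<open>\<alpha> + \<beta> = 1\<close>, and associativity, compared on the
word \<open>y x z\<close>, gives \<open>\<alpha> \<beta> = 0\<close>.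
\<close>

lemma mult_representative:
  fixes x y z :: 'x
  assumes xy: "x \<noteq> y" and xz: "x \<noteq> z" and yz: "y \<noteq> z" and S: "S \<in> fpolys {x, y}"
    and rep: "\<And>Y c d. finite Y \<Longrightarrow> c \<in> fpolys Y \<Longrightarrow> d \<in> fpolys Y \<Longrightarrow>
      u Y (subst2 x y c d S) = fp_mult (u Y c) (u Y d)"
  shows "S = mon [x, y] \<or> S = mon [y, x]"
proof -
  let ?X = "{x, y}" and ?X3 = "{x, y, z}"
  define \<alpha> \<beta> where "\<alpha> = S [x, y]" and "\<beta> = S [y, x]"
  have Sdec: "S = fp_smult \<alpha> (mon [x, y]) + fp_smult \<beta> (mon [y, x])"
    unfolding \<alpha>_def \<beta>_def by (rule mult_representative_two_terms[OF xy S rep])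
  then have sS: "subst2 x y c d S = fp_smult \<alpha> (fp_mult c d) + fp_smult \<beta> (fp_mult d c)" for c d
    using xy by (simp add: subst2_two_terms)
  have "\<alpha> + \<beta> = 1"
  proof -
    have "u ?X (subst2 x y (mon [x]) fp_one S) = u ?X (mon [x])"
      using rep[of ?X "mon [x]" fp_one] u_cst[of ?X 1] by (simp add: cst_one)
    then have "subst2 x y (mon [x]) fp_one S = mon [x]" by (rule u_inj[rotated -1]) (simp_all add: S subst2_in)
    then have "fp_smult (\<alpha> + \<beta>) (mon [x]) [x] = mon [x] [x]" by (simp add: sS fp_smult_add_left)
    then show ?thesis by (simp add: fp_smult_apply mon_def)
  qed
  moreover have "\<alpha> * \<beta> = 0"
  proof -
    have x3: "mon [x] \<in> fpolys ?X3" and y3: "mon [y] \<in> fpolys ?X3" and z3: "mon [z] \<in> fpolys ?X3"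
      and S3: "S \<in> fpolys ?X3" using fpolys_mono[OF _ S, of ?X3] by auto
    define S' where "S' = subst2 x y (mon [y]) (mon [z]) S"
    have S'3: "S' \<in> fpolys ?X3" unfolding S'_def by (rule subst2_in[OF y3 z3 S])
    have "subst2 x y (mon [x]) (mon [y]) S = S" unfolding sS fp_mult_mon using Sdec by simp
    then have "u ?X3 S = fp_mult (u ?X3 (mon [x])) (u ?X3 (mon [y]))" using rep[OF _ x3 y3] by simp
    then have "u ?X3 (subst2 x y S (mon [z]) S) = u ?X3 (subst2 x y (mon [x]) S' S)"
      using rep[OF _ S3 z3] rep[OF _ x3 S'3] rep[OF _ y3 z3] by (simp add: S'_def fp_mult_assoc)
    then have "subst2 x y S (mon [z]) S = subst2 x y (mon [x]) S' S"
      by (rule u_inj[rotated -1]) (simp_all add: S S3 S'3 x3 z3 subst2_in)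
    then have "subst2 x y S (mon [z]) S [y, x, z] = subst2 x y (mon [x]) S' S [y, x, z]" by simp
    then show ?thesis
      unfolding sS S'_def unfolding Sdec
      unfolding fp_mult_add_left fp_mult_add_right fp_mult_smult_left fp_mult_smult_right fp_mult_mon
      using xy xz yz by (simp add: plus_fun_apply fp_smult_apply mon_def)
  qed
  ultimately have "\<alpha> = 1 \<and> \<beta> = 0 \<or> \<alpha> = 0 \<and> \<beta> = 1" by auto
  then show ?thesis using Sdec by auto
qed

lemma u_mult_or_antimult:
  fixes x y z :: 'x
  assumes xy: "x \<noteq> y" and xz: "x \<noteq> z" and yz: "y \<noteq> z"
  shows "(\<forall>X a b. finite X \<longrightarrow> a \<in> fpolys X \<longrightarrow> b \<in> fpolys X \<longrightarrow> u X (fp_mult a b) = fp_mult (u X a) (u X b))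
       \<or> (\<forall>X a b. finite X \<longrightarrow> a \<in> fpolys X \<longrightarrow> b \<in> fpolys X \<longrightarrow> u X (fp_mult a b) = fp_mult (u X b) (u X a))"
proof -
  have "\<exists>S\<in>fpolys {x, y}. \<forall>Y c d. finite Y \<longrightarrow> c \<in> fpolys Y \<longrightarrow> d \<in> fpolys Y \<longrightarrow>
      u Y (subst2 x y c d S) = fp_mult (u Y c) (u Y d)"
    by (rule op_representative[where op=fp_mult, OF xy]) (simp, rule alg_hom_mult)
  then obtain S where S: "S \<in> fpolys {x, y}" and rep: "\<forall>Y c d. finite Y \<longrightarrow> c \<in> fpolys Y \<longrightarrow> d \<in> fpolys Y \<longrightarrow>
      u Y (subst2 x y c d S) = fp_mult (u Y c) (u Y d)" ..
  note rep = rep[rule_format]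
  from mult_representative[OF xy xz yz S rep] show ?thesis
  proof
    assume "S = mon [x, y]"
    then have "subst2 x y a b S = fp_mult a b" for a b using xy by (simp add: subst2_def subst_hom_def subst_mon)
    then have "u X (fp_mult a b) = fp_mult (u X a) (u X b)"
      if "finite X" "a \<in> fpolys X" "b \<in> fpolys X" for X a b using rep[OF that] by simp
    then show ?thesis by blast
  next
    assume "S = mon [y, x]"
    then have "subst2 x y b a S = fp_mult a b" for a b using xy by (simp add: subst2_def subst_hom_def subst_mon)
    then have "u X (fp_mult a b) = fp_mult (u X b) (u X a)"
      if "finite X" "a \<in> fpolys X" "b \<in> fpolys X" for X a b using rep[OF that(1,3,2)] by simp
    then show ?thesis by blast
  qed
qed

end

section \<open>Normalizing the induced bijections\<close>

locale normalized_cat_automorphism = pointed_cat_automorphism FO FM x0 y0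
  for FO :: "'x set \<Rightarrow> 'x set" and FM :: "('x, 'k::field) mor \<Rightarrow> ('x, 'k) mor" and x0 y0 +
  fixes \<phi> :: "'k \<Rightarrow> 'k" and k1 k0 :: 'k
  assumes infinite_field: "infinite (UNIV :: 'k set)"
    and field_aut_\<phi>: "field_aut \<phi>" and k1: "k1 \<noteq> 0" and kappa_eq: "kappa a = k1 * \<phi> a + k0"
begin

abbreviation "\<psi> \<equiv> inv \<phi>"

lemma field_aut_\<psi>: "field_aut \<psi>"
  by (rule field_aut_inv[OF field_aut_\<phi>])

definition T :: "('x, 'k) fpoly \<Rightarrow> ('x, 'k) fpoly" where
  "T a = fp_smult (inverse (\<psi> k1)) (a - cst (\<psi> k0))"

definition U :: "'x set \<Rightarrow> ('x, 'k) fpoly \<Rightarrow> ('x, 'k) fpoly" where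
  "U X a = coeff_map \<psi> (Fel X (T a))"

definition Fmap_tw :: "'x set \<Rightarrow> 'x set \<Rightarrow> (('x, 'k) fpoly \<Rightarrow> ('x, 'k) fpoly) \<Rightarrow> ('x, 'k) fpoly \<Rightarrow> ('x, 'k) fpoly" where
  "Fmap_tw X Y \<nu> = restr (FO X) (coeff_map \<psi> \<circ> Fmap X Y \<nu> \<circ> coeff_map \<phi>)"

lemma \<psi>k1: "\<psi> k1 \<noteq> 0"
  using k1 field_aut_eq_0_iff[OF field_aut_\<psi>] by simp

lemma \<psi>_kappa: "\<psi> (kappa a) = \<psi> k1 * a + \<psi> k0"
  by (simp add: kappa_eq field_aut_add[OF field_aut_\<psi>] field_aut_mult[OF field_aut_\<psi>]
      field_aut_inv_left[OF field_aut_\<phi>])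

lemma \<psi>_kappa_T: "\<psi> (kappa ((c - \<psi> k0) / \<psi> k1)) = c"
  using \<psi>k1 by (simp add: \<psi>_kappa)

lemma T_in: "a \<in> fpolys X \<Longrightarrow> T a \<in> fpolys X"
  by (simp add: T_def)

lemma T_cst: "T (cst c) = cst ((c - \<psi> k0) / \<psi> k1)"
  by (simp add: T_def smult_cst fun_eq_iff cst_def divide_inverse fp_smult_def)

lemma diff_cst: "a - cst c = a + cst (- c)"
  by (simp add: fun_eq_iff cst_def plus_fun_apply)

lemma alg_hom_T:
  assumes nu: "alg_hom X Y \<nu>" and a: "a \<in> fpolys X"
  shows "\<nu> (T a) = T (\<nu> a)"
  using a by (simp add: T_def diff_cst alg_hom_add[OF nu] alg_hom_smult[OF nu] alg_hom_cst[OF nu])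

lemma bij_betw_T: "bij_betw T (fpolys X) (fpolys X)"
  by (rule bij_betw_byWitness[where f'="\<lambda>b. fp_smult (\<psi> k1) b + cst (\<psi> k0)"])
     (auto simp: T_def \<psi>k1 fp_smult_add)

lemma ev_T:
  assumes p: "finite (fsupp p)"
  shows "ev (T p) a = (ev p a - \<psi> k0) / \<psi> k1"
proof -
  have "finite (fsupp (p + cst (- \<psi> k0)))"
    using p fsupp_add[of p] fpolys_finite[OF fpolys_cst] by (meson finite_UnI finite_subset)
  then show ?thesis
    by (simp add: T_def diff_cst ev_smult ev_add[OF p] fpolys_finite[OF fpolys_cst] divide_inverse
        mult.commute)
qed

lemma bij_betw_U: "finite X \<Longrightarrow> bij_betw (U X) (fpolys X) (fpolys (FO X))"
proof -
  assume X: "finite X"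
  have "bij_betw (coeff_map \<psi> \<circ> (Fel X \<circ> T)) (fpolys X) (fpolys (FO X))"
    by (rule bij_betw_trans[OF bij_betw_trans[OF bij_betw_T bij_betw_Fel[OF X]] bij_betw_coeff_map[OF field_aut_\<psi>]])
  moreover have "coeff_map \<psi> \<circ> (Fel X \<circ> T) = U X" by (simp add: U_def fun_eq_iff)
  ultimately show ?thesis by simp
qed

lemma U_in: "finite X \<Longrightarrow> a \<in> fpolys X \<Longrightarrow> U X a \<in> fpolys (FO X)"
  using bij_betw_U by (auto simp: bij_betw_def)

lemma Fel_T: "Fel X (T a) = coeff_map \<phi> (U X a)"
  by (simp add: U_def coeff_map_inv_right[OF field_aut_\<phi>])

lemma U_natural:
  assumes X: "finite X" and Y: "finite Y" and nu: "alg_hom X Y \<nu>" and a: "a \<in> fpolys X"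
  shows "U Y (\<nu> a) = Fmap_tw X Y \<nu> (U X a)"
proof -
  have "U Y (\<nu> a) = coeff_map \<psi> (Fel Y (\<nu> (T a)))" by (simp add: U_def alg_hom_T[OF nu a])
  also have "\<dots> = coeff_map \<psi> (Fmap X Y \<nu> (Fel X (T a)))" by (simp add: Fel_natural[OF X Y nu T_in[OF a]])
  also have "\<dots> = Fmap_tw X Y \<nu> (U X a)" using U_in[OF X a] by (simp add: Fmap_tw_def Fel_T)
  finally show ?thesis .
qed

lemma U_cst: "finite X \<Longrightarrow> U X (cst c) = cst c"
  by (simp add: U_def T_cst Fel_cst coeff_map_cst[OF field_aut_\<psi>] \<psi>_kappa_T)

lemma ev_U_x0:
  obtains a where "\<forall>q\<in>fpolys {x0}. ev (U {x0} q) t = ev q a"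
proof -
  obtain a where a: "kappa a = \<phi> t" using bij_kappa by (metis bij_pointE)
  have "ev (U {x0} q) t = ev q a" if q: "q \<in> fpolys {x0}" for q
  proof -
    have "ev (U {x0} q) t = \<psi> (ev (Fel {x0} (T q)) (\<phi> t))"
      by (simp add: U_def ev_coeff_map_inv[OF field_aut_\<phi>])
    also have "\<dots> = \<psi> (kappa (ev (T q) a))" using kappa_ev[OF T_in[OF q], of a] a by simp
    also have "\<dots> = ev q a" using ev_T[OF fpolys_finite[OF q]] \<psi>_kappa_T by simp
    finally show ?thesis .
  qed
  then show thesis using that by blast
qed

lemma U_scal: "U {x0} (fp_smult l (mon [x0])) = fp_smult l (U {x0} (mon [x0]))"
proof (rule fpolys_single_eqI[OF infinite_field])
  have "U {x0} (mon [x0]) \<in> fpolys {y0}" "U {x0} (fp_smult l (mon [x0])) \<in> fpolys {y0}"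
    using U_in[of "{x0}"] FO_x0 by simp_all
  then show "U {x0} (fp_smult l (mon [x0])) \<in> fpolys {y0}" "fp_smult l (U {x0} (mon [x0])) \<in> fpolys {y0}"
    by simp_all
  fix t
  obtain a where "\<forall>q\<in>fpolys {x0}. ev (U {x0} q) t = ev q a" by (rule ev_U_x0)
  then show "ev (U {x0} (fp_smult l (mon [x0]))) t = ev (fp_smult l (U {x0} (mon [x0]))) t"
    using \<open>U {x0} (mon [x0]) \<in> fpolys {y0}\<close> by (simp add: ev_smult fpolys_finite)
qed

lemma natural_transfer_U: "natural_transfer FO U Fmap_tw x0"
proof
  show "\<And>X Y \<nu>. finite X \<Longrightarrow> finite Y \<Longrightarrow> alg_hom X Y \<nu> \<Longrightarrow> alg_hom (FO X) (FO Y) (Fmap_tw X Y \<nu>)"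
    unfolding Fmap_tw_def by (rule alg_hom_conj_coeff_map[OF field_aut_\<phi> alg_hom_Fmap])
qed (simp_all add: bij_betw_U U_natural U_cst U_scal infinite_field)

end

section \<open>Conjugating by a family of isomorphisms\<close>

definition conj_mor :: "('x set \<Rightarrow> 'x set) \<Rightarrow> ('x set \<Rightarrow> ('x, 'k::field) fpoly \<Rightarrow> ('x, 'k) fpoly) \<Rightarrow> ('x, 'k) mor \<Rightarrow> ('x, 'k) mor" where
  "conj_mor F \<sigma> m = (F (mdom m), F (mcod m),
      restr (F (mdom m)) (\<sigma> (mcod m) \<circ> mfun m \<circ> inv_into (fpolys (mdom m)) (\<sigma> (mdom m))))"

lemma inner_aut_conj_mor:
  assumes "\<And>X. X \<in> Obj \<Longrightarrow> alg_hom X (F X) (\<sigma> X) \<and> bij_betw (\<sigma> X) (fpolys X) (fpolys (F X))"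
  shows "inner_aut F (conj_mor F \<sigma>)"
  unfolding inner_aut_def conj_mor_def using assms by blast

locale iso_family =
  fixes F :: "'x set \<Rightarrow> 'x set" and \<sigma> :: "'x set \<Rightarrow> ('x, 'k::field) fpoly \<Rightarrow> ('x, 'k) fpoly"
  assumes F_bij: "bij_betw F Obj Obj"
    and alg_hom_\<sigma>: "finite X \<Longrightarrow> alg_hom X (F X) (\<sigma> X)"
    and bij_\<sigma>: "finite X \<Longrightarrow> bij_betw (\<sigma> X) (fpolys X) (fpolys (F X))"
begin

definition \<sigma>inv :: "'x set \<Rightarrow> ('x, 'k) fpoly \<Rightarrow> ('x, 'k) fpoly" where
  "\<sigma>inv X = inv_into (fpolys X) (\<sigma> X)"

lemma \<sigma>inv_in: "finite X \<Longrightarrow> b \<in> fpolys (F X) \<Longrightarrow> \<sigma>inv X b \<in> fpolys X"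
  unfolding \<sigma>inv_def by (rule bij_betwE[OF bij_betw_inv_into[OF bij_\<sigma>], rule_format])

lemma \<sigma>_\<sigma>inv: "finite X \<Longrightarrow> b \<in> fpolys (F X) \<Longrightarrow> \<sigma> X (\<sigma>inv X b) = b"
  unfolding \<sigma>inv_def by (rule bij_betw_inv_into_right[OF bij_\<sigma>])

lemma \<sigma>inv_\<sigma>: "finite X \<Longrightarrow> a \<in> fpolys X \<Longrightarrow> \<sigma>inv X (\<sigma> X a) = a"
  unfolding \<sigma>inv_def by (rule bij_betw_inv_into_left[OF bij_\<sigma>])

lemma \<sigma>_in: "finite X \<Longrightarrow> a \<in> fpolys X \<Longrightarrow> \<sigma> X a \<in> fpolys (F X)"
  by (rule alg_hom_in[OF alg_hom_\<sigma>])

lemma alg_hom_\<sigma>inv: "finite X \<Longrightarrow> alg_hom (F X) X (restr (F X) (\<sigma>inv X))"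
  unfolding \<sigma>inv_def by (rule alg_hom_inv_into[OF alg_hom_\<sigma> bij_\<sigma>])

lemma conj_mor_simp: "conj_mor F \<sigma> (X, Y, f) = (F X, F Y, restr (F X) (\<sigma> Y \<circ> f \<circ> \<sigma>inv X))"
  by (simp add: conj_mor_def \<sigma>inv_def mdom_def mcod_def mfun_def)

lemma alg_hom_conj:
  assumes X: "finite X" and Y: "finite Y" and f: "alg_hom X Y f"
  shows "alg_hom (F X) (F Y) (restr (F X) (\<sigma> Y \<circ> f \<circ> \<sigma>inv X))"
proof -
  have "alg_hom (F X) (F Y) (restr (F X) (\<sigma> Y \<circ> restr (F X) (f \<circ> restr (F X) (\<sigma>inv X))))"
    by (rule alg_hom_comp[OF alg_hom_comp[OF alg_hom_\<sigma>inv[OF X] f] alg_hom_\<sigma>[OF Y]])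
  moreover have "restr (F X) (\<sigma> Y \<circ> restr (F X) (f \<circ> restr (F X) (\<sigma>inv X))) = restr (F X) (\<sigma> Y \<circ> f \<circ> \<sigma>inv X)"
    by (rule restr_cong) simp
  ultimately show ?thesis by simp
qed

lemma conj_mor_in_Mor: "m \<in> Mor \<Longrightarrow> conj_mor F \<sigma> m \<in> Mor"
  by (cases m) (auto simp: conj_mor_simp Mor_iff alg_hom_conj Obj_bij_finite[OF F_bij])

lemma inj_on_conj_mor: "inj_on (conj_mor F \<sigma>) Mor"
proof (rule inj_onI)
  fix m1 m2 :: "('x, 'k) mor"
  assume m1: "m1 \<in> Mor" and m2: "m2 \<in> Mor" and e: "conj_mor F \<sigma> m1 = conj_mor F \<sigma> m2"
  obtain X Y f1 X2 Y2 f2 where m: "m1 = (X, Y, f1)" "m2 = (X2, Y2, f2)" by (cases m1, cases m2) auto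
  have X: "finite X" and Y: "finite Y" and f1: "alg_hom X Y f1"
    and X2: "finite X2" and Y2: "finite Y2" and f2: "alg_hom X2 Y2 f2"
    using m1 m2 m by (auto simp: Mor_iff)
  have "X2 = X" "Y2 = Y" using e m Obj_bij_inj[OF F_bij] X Y X2 Y2 by (auto simp: conj_mor_simp)
  then have f2: "alg_hom X Y f2" and fe: "restr (F X) (\<sigma> Y \<circ> f1 \<circ> \<sigma>inv X) = restr (F X) (\<sigma> Y \<circ> f2 \<circ> \<sigma>inv X)"
    using e m f2 by (auto simp: conj_mor_simp)
  have "f1 p = f2 p" for p
  proof (cases "p \<in> fpolys X")
    case True
    then have "\<sigma> Y (f1 p) = \<sigma> Y (f2 p)"
      using fun_cong[OF fe, of "\<sigma> X p"] \<sigma>_in[OF X] \<sigma>inv_\<sigma>[OF X] by simp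
    then show ?thesis
      using bij_\<sigma>[OF Y] alg_hom_in[OF f1 True] alg_hom_in[OF f2 True] by (auto simp: bij_betw_def inj_on_def)
  qed (simp add: alg_hom_out[OF f1] alg_hom_out[OF f2])
  then show "m1 = m2" using m \<open>X2 = X\<close> \<open>Y2 = Y\<close> by auto
qed

lemma conj_mor_surj: "Mor \<subseteq> conj_mor F \<sigma> ` Mor"
proof
  fix m' :: "('x, 'k) mor" assume m': "m' \<in> Mor"
  obtain X' Y' g where mm: "m' = (X', Y', g)" by (cases m') auto
  obtain X Y where X: "finite X" and Y: "finite Y" and g: "alg_hom (F X) (F Y) g" and XY: "m' = (F X, F Y, g)"
    using m' mm Obj_bij_surj[OF F_bij] by (auto simp: Mor_iff) metis
  let ?f = "restr X (\<sigma>inv Y \<circ> g \<circ> \<sigma> X)"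
  have "alg_hom X Y (restr X (restr (F Y) (\<sigma>inv Y) \<circ> restr X (g \<circ> \<sigma> X)))"
    by (rule alg_hom_comp[OF alg_hom_comp[OF alg_hom_\<sigma>[OF X] g] alg_hom_\<sigma>inv[OF Y]])
  moreover have "restr X (restr (F Y) (\<sigma>inv Y) \<circ> restr X (g \<circ> \<sigma> X)) = ?f"
    by (rule restr_cong) (simp add: alg_hom_in[OF g] \<sigma>_in[OF X])
  ultimately have f: "alg_hom X Y ?f" by simp
  have "restr (F X) (\<sigma> Y \<circ> ?f \<circ> \<sigma>inv X) = g"
  proof
    fix b show "restr (F X) (\<sigma> Y \<circ> ?f \<circ> \<sigma>inv X) b = g b"
      by (cases "b \<in> fpolys (F X)")
         (simp_all add: \<sigma>inv_in[OF X] \<sigma>_\<sigma>inv[OF X] \<sigma>_\<sigma>inv[OF Y] alg_hom_in[OF g] alg_hom_out[OF g])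
  qed
  then have "conj_mor F \<sigma> (X, Y, ?f) = m'" by (simp add: conj_mor_simp XY)
  moreover have "(X, Y, ?f) \<in> Mor" using X Y f by (simp add: Mor_iff)
  ultimately show "m' \<in> conj_mor F \<sigma> ` Mor" by blast
qed

lemma conj_mor_mcomp:
  assumes f: "f \<in> Mor" and g: "g \<in> Mor" and fg: "mcod f = mdom g"
  shows "conj_mor F \<sigma> (mcomp g f) = mcomp (conj_mor F \<sigma> g) (conj_mor F \<sigma> f)"
proof -
  obtain X Y f1 Z g1 where ff: "f = (X, Y, f1)" and gg: "g = (Y, Z, g1)"
    using fg by (cases f, cases g) (auto simp: mdom_def mcod_def)
  have X: "finite X" and Y: "finite Y" and f1: "alg_hom X Y f1"
    using f ff by (auto simp: Mor_iff)
  have "restr (F X) (\<sigma> Z \<circ> restr X (g1 \<circ> f1) \<circ> \<sigma>inv X)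
      = restr (F X) (restr (F Y) (\<sigma> Z \<circ> g1 \<circ> \<sigma>inv Y) \<circ> restr (F X) (\<sigma> Y \<circ> f1 \<circ> \<sigma>inv X))"
    by (rule restr_cong) (simp add: \<sigma>inv_in[OF X] alg_hom_in[OF f1] \<sigma>_in[OF Y] \<sigma>inv_\<sigma>[OF Y])
  then show ?thesis by (simp add: ff gg mcomp_simp conj_mor_simp)
qed

lemma conj_mor_mid: "X \<in> Obj \<Longrightarrow> conj_mor F \<sigma> (mid X) = mid (F X)"
  by (simp add: mid_def conj_mor_simp Obj_iff \<sigma>inv_in \<sigma>_\<sigma>inv cong: restr_cong)

lemma cat_aut_conj_mor: "cat_aut F (conj_mor F \<sigma>)"
  unfolding cat_aut_def
proof (intro conjI ballI impI)
  show "bij_betw (conj_mor F \<sigma>) Mor Mor"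
    using inj_on_conj_mor conj_mor_surj conj_mor_in_Mor by (auto simp: bij_betw_def)
qed (simp_all add: F_bij conj_mor_mcomp conj_mor_mid, simp_all add: conj_mor_def mdom_def mcod_def)

end

definition conj_by :: "(('x, 'k::field) fpoly \<Rightarrow> ('x, 'k) fpoly) \<Rightarrow> ('x, 'k) mor \<Rightarrow> ('x, 'k) mor" where
  "conj_by \<eta> m = (mdom m, mcod m, restr (mdom m) (\<eta> \<circ> mfun m \<circ> inv_into (fpolys (mdom m)) \<eta>))"

lemma inv_into_involution:
  assumes "\<And>p. \<eta> (\<eta> p) = p" and "\<And>p. p \<in> A \<Longrightarrow> \<eta> p \<in> A" and "b \<in> A"
  shows "inv_into A \<eta> b = \<eta> b"
  using assms by (metis inv_into_f_eq inj_onI)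

lemma conj_by_id_std_aut:
  fixes m :: "('x, 'k::field) mor"
  shows "conj_by id (std_aut \<phi> m) = std_aut \<phi> m"
proof -
  have "inv_into A id b = b" if "b \<in> A" for A and b :: "('x, 'k) fpoly"
    using inv_into_involution[of id A b] that by simp
  then show ?thesis
    by (simp add: conj_by_def std_aut_def mdom_def mcod_def mfun_def) (rule restr_cong, simp)
qed

context normalized_cat_automorphism
begin

lemma alg_hom_comp_U:
  fixes \<eta> :: "('x, 'k) fpoly \<Rightarrow> ('x, 'k) fpoly"
  assumes \<eta>_add: "\<And>p q. \<eta> (p + q) = \<eta> p + \<eta> q"
    and \<eta>_smult: "\<And>c p. \<eta> (fp_smult c p) = fp_smult c (\<eta> p)"
    and \<eta>_one: "\<eta> fp_one = fp_one"
    and \<eta>_in: "\<And>X p. p \<in> fpolys X \<Longrightarrow> \<eta> p \<in> fpolys X"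
    and U_add: "\<And>X a b. finite X \<Longrightarrow> a \<in> fpolys X \<Longrightarrow> b \<in> fpolys X \<Longrightarrow> U X (a + b) = U X a + U X b"
    and U_smult: "\<And>X a c. finite X \<Longrightarrow> a \<in> fpolys X \<Longrightarrow> U X (fp_smult c a) = fp_smult c (U X a)"
    and U_mult: "\<And>X a b. finite X \<Longrightarrow> a \<in> fpolys X \<Longrightarrow> b \<in> fpolys X \<Longrightarrow>
                 \<eta> (U X (fp_mult a b)) = fp_mult (\<eta> (U X a)) (\<eta> (U X b))"
    and X: "finite X"
  shows "alg_hom X (FO X) (restr X (\<eta> \<circ> U X))"
  unfolding alg_hom_def using U_in[OF X] U_cst[OF X, of 1]
  by (simp add: \<eta>_in fp_add_eq U_add[OF X] \<eta>_add U_mult[OF X] U_smult[OF X] \<eta>_smult cst_one \<eta>_one)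

lemma iso_family_U:
  fixes \<eta> :: "('x, 'k) fpoly \<Rightarrow> ('x, 'k) fpoly"
  assumes \<eta>_inv: "\<And>p. \<eta> (\<eta> p) = p"
    and \<eta>_in: "\<And>X p. p \<in> fpolys X \<Longrightarrow> \<eta> p \<in> fpolys X"
    and \<sigma>_hom: "\<And>X. finite X \<Longrightarrow> alg_hom X (FO X) (restr X (\<eta> \<circ> U X))"
  shows "iso_family FO (\<lambda>X. restr X (\<eta> \<circ> U X))"
proof
  have bij_\<eta>: "bij_betw \<eta> (fpolys A) (fpolys A)" for A
    by (rule bij_betw_byWitness[where f'=\<eta>]) (auto simp: \<eta>_inv \<eta>_in)
  show "bij_betw (restr X (\<eta> \<circ> U X)) (fpolys X) (fpolys (FO X))" if X: "finite X" for X
    using bij_betw_trans[OF bij_betw_U[OF X] bij_\<eta>] by (simp cong: bij_betw_cong)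
qed (simp_all add: FO_bij \<sigma>_hom)

lemma FM_eq_conj_by:
  fixes \<eta> :: "('x, 'k) fpoly \<Rightarrow> ('x, 'k) fpoly"
  assumes \<eta>_inv: "\<And>p. \<eta> (\<eta> p) = p"
    and \<eta>_in: "\<And>X p. p \<in> fpolys X \<Longrightarrow> \<eta> p \<in> fpolys X"
    and \<eta>_coeff: "\<And>f p. \<eta> (coeff_map f p) = coeff_map f (\<eta> p)"
    and fam: "iso_family FO (\<lambda>X. restr X (\<eta> \<circ> U X))" and "m \<in> Mor"
  shows "FM m = conj_by \<eta> (std_aut \<phi> (conj_mor FO (\<lambda>X. restr X (\<eta> \<circ> U X)) m))"
proof -
  interpret iso_family FO "\<lambda>X. restr X (\<eta> \<circ> U X)" by (rule fam)
  obtain X Y \<nu> where m: "m = (X, Y, \<nu>)" and X: "finite X" and Y: "finite Y" and nu: "alg_hom X Y \<nu>"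
    using \<open>m \<in> Mor\<close> by (cases m) (auto simp: Mor_iff)
  define h where "h = restr (FO X) (coeff_map \<phi> \<circ> restr (FO X) (restr Y (\<eta> \<circ> U Y) \<circ> \<nu> \<circ> \<sigma>inv X) \<circ> coeff_map \<psi>)"
  have "Fmap X Y \<nu> b = \<eta> (h (\<eta> b))" if b: "b \<in> fpolys (FO X)" for b
  proof -
    obtain a where a: "a \<in> fpolys X" "b = Fel X (T a)"
      using b bij_betw_trans[OF bij_betw_T bij_betw_Fel[OF X]] by (auto simp: bij_betw_def)
    then have "coeff_map \<psi> (\<eta> b) = restr X (\<eta> \<circ> U X) a"
      by (simp add: Fel_T \<eta>_coeff[symmetric] coeff_map_inv_left[OF field_aut_\<phi>])
    moreover have "coeff_map \<psi> (\<eta> b) \<in> fpolys (FO X)"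
      using \<eta>_in[OF b] coeff_map_in_fpolys_iff[OF field_aut_\<psi>] by blast
    ultimately have "h (\<eta> b) = coeff_map \<phi> (\<eta> (U Y (\<nu> a)))"
      using \<eta>_in[OF b] \<sigma>inv_\<sigma>[OF X a(1)] alg_hom_in[OF nu a(1)] by (simp add: h_def)
    also have "\<dots> = \<eta> (Fel Y (T (\<nu> a)))" by (simp add: \<eta>_coeff Fel_T)
    also have "\<dots> = \<eta> (Fmap X Y \<nu> b)"
      by (simp add: a(2) alg_hom_T[OF nu a(1), symmetric] Fel_natural[OF X Y nu T_in[OF a(1)]])
    finally show ?thesis by (simp add: \<eta>_inv)
  qed
  then have "Fmap X Y \<nu> = restr (FO X) (\<eta> \<circ> h \<circ> inv_into (fpolys (FO X)) \<eta>)"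
    using alg_hom_out[OF alg_hom_Fmap[OF X Y nu]]
    by (auto simp: fun_eq_iff restr_def inv_into_involution[OF \<eta>_inv \<eta>_in])
  then show ?thesis
    by (simp add: m conj_mor_simp std_aut_def h_def FM_eq_Fmap(1)[OF X Y nu] conj_by_def
        mdom_def mcod_def mfun_def)
qed

lemma decomposition_from_alg_hom:
  fixes \<eta> :: "('x, 'k) fpoly \<Rightarrow> ('x, 'k) fpoly" and UM :: "('x, 'k) mor \<Rightarrow> ('x, 'k) mor"
  assumes "\<And>p. \<eta> (\<eta> p) = p" "\<And>X p. p \<in> fpolys X \<Longrightarrow> \<eta> p \<in> fpolys X"
    "\<And>f p. \<eta> (coeff_map f p) = coeff_map f (\<eta> p)"
    "\<And>X. finite X \<Longrightarrow> alg_hom X (FO X) (restr X (\<eta> \<circ> U X))"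
    and UM: "UM = mirror_aut \<or> UM = id" and conj_by_UM: "\<And>m. conj_by \<eta> (std_aut \<phi> m) = UM (std_aut \<phi> m)"
  shows "\<exists>PO PM \<phi>' (UM :: ('x, 'k) mor \<Rightarrow> ('x, 'k) mor).
           cat_aut PO PM \<and> inner_aut PO PM \<and> field_aut \<phi>' \<and>
           (UM = mirror_aut \<or> UM = id) \<and>
           (\<forall>X\<in>Obj. FO X = PO X) \<and>
           (\<forall>m\<in>Mor. FM m = UM (std_aut \<phi>' (PM m)))"
proof -
  note fam = iso_family_U[OF assms(1,2,4)]
  interpret iso_family FO "\<lambda>X. restr X (\<eta> \<circ> U X)" by (rule fam)
  have "inner_aut FO (conj_mor FO (\<lambda>X. restr X (\<eta> \<circ> U X)))"
    by (rule inner_aut_conj_mor) (simp add: Obj_iff alg_hom_\<sigma> bij_\<sigma>)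
  moreover have "\<forall>m\<in>Mor. FM m = UM (std_aut \<phi> (conj_mor FO (\<lambda>X. restr X (\<eta> \<circ> U X)) m))"
    using FM_eq_conj_by[OF assms(1-3) fam] conj_by_UM by simp
  ultimately show ?thesis using cat_aut_conj_mor field_aut_\<phi> UM by blast
qed

lemma decomposition:
  assumes inf: "infinite (UNIV :: 'x set)"
  shows "\<exists>PO PM \<phi>' (UM :: ('x, 'k) mor \<Rightarrow> ('x, 'k) mor).
           cat_aut PO PM \<and> inner_aut PO PM \<and> field_aut \<phi>' \<and>
           (UM = mirror_aut \<or> UM = id) \<and>
           (\<forall>X\<in>Obj. FO X = PO X) \<and>
           (\<forall>m\<in>Mor. FM m = UM (std_aut \<phi>' (PM m)))"
proof -
  obtain x :: 'x where True by simp
  obtain y where "y \<notin> {x}" using ex_new_if_finite[OF inf, of "{x}"] by auto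
  moreover obtain z where "z \<notin> {x, y}" using ex_new_if_finite[OF inf, of "{x, y}"] by auto
  ultimately have xyz: "x \<noteq> y" "x \<noteq> z" "y \<noteq> z" by auto
  have add: "\<And>X a b. finite X \<Longrightarrow> a \<in> fpolys X \<Longrightarrow> b \<in> fpolys X \<Longrightarrow> U X (a + b) = U X a + U X b"
    by (rule natural_transfer.u_add[OF natural_transfer_U xyz(1)])
  have smult: "\<And>X a c. finite X \<Longrightarrow> a \<in> fpolys X \<Longrightarrow> U X (fp_smult c a) = fp_smult c (U X a)"
    by (rule natural_transfer.u_smult[OF natural_transfer_U])
  from natural_transfer.u_mult_or_antimult[OF natural_transfer_U xyz] show ?thesis
  proof
    assume mult: "\<forall>X a b. finite X \<longrightarrow> a \<in> fpolys X \<longrightarrow> b \<in> fpolys X \<longrightarrow>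
      U X (fp_mult a b) = fp_mult (U X a) (U X b)"
    have "alg_hom X (FO X) (restr X (id \<circ> U X))" if "finite X" for X
      by (rule alg_hom_comp_U) (simp_all add: that add smult mult)
    then show ?thesis by (intro decomposition_from_alg_hom[of id id]) (simp_all add: conj_by_id_std_aut)
  next
    assume antimult: "\<forall>X a b. finite X \<longrightarrow> a \<in> fpolys X \<longrightarrow> b \<in> fpolys X \<longrightarrow>
      U X (fp_mult a b) = fp_mult (U X b) (U X a)"
    have "alg_hom X (FO X) (restr X (mirror_map \<circ> U X))" if "finite X" for X
      by (rule alg_hom_comp_U)
         (simp_all add: that add smult antimult mirror_map_add mirror_map_smult mirror_map_one mirror_map_in_fpolys mirror_map_mult)
    then show ?thesis
      by (intro decomposition_from_alg_hom[of mirror_map mirror_aut])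
         (simp_all add: mirror_map_in_fpolys mirror_map_coeff_map mirror_aut_def conj_by_def)
  qed
qed

end

theorem mainTheorem11:
  fixes FO :: "'x set \<Rightarrow> 'x set"
    and FM :: "('x, 'k::field) mor \<Rightarrow> ('x, 'k) mor"
  assumes "infinite (UNIV :: 'k set)"
    and "infinite (UNIV :: 'x set)"
    and "cat_aut FO FM"
  shows "\<exists>PO PM \<phi> (UM :: ('x, 'k) mor \<Rightarrow> ('x, 'k) mor).
           cat_aut PO PM \<and> inner_aut PO PM \<and> field_aut \<phi> \<and>
           (UM = mirror_aut \<or> UM = id) \<and>
           (\<forall>X\<in>Obj. FO X = PO X) \<and>
           (\<forall>m\<in>Mor. FM m = UM (std_aut \<phi> (PM m)))"
proof -
  interpret cat_automorphism FO FM by unfold_locales (rule assms(3))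
  obtain x0 :: 'x where True by simp
  obtain y0 where "FO {x0} = {y0}" using FO_singleton[OF assms(2)] by blast
  then interpret pointed_cat_automorphism FO FM x0 y0 by unfold_locales
  obtain \<phi> k1 k0 where "field_aut \<phi>" "k1 \<noteq> 0" "\<forall>a. kappa a = k1 * \<phi> a + k0"
    using kappa_semiaffine[OF assms(1)] by blast
  then interpret normalized_cat_automorphism FO FM x0 y0 \<phi> k1 k0
    by unfold_locales (simp_all add: assms(1))
  show ?thesis by (rule decomposition[OF assms(2)])
qed

end
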